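(* Let $\mathbf{p}=(p,s)$ with $p\in(0,1]$, $s\in\mathbb{R}$, and let $c$ be a Whitney parameter. Then $f\in L^0(\mathbb{R}^{1+n}_+)$ belongs to $Z^{\mathbf{p}}$ if and only if there exist a sequence $(a_k)_{k\in\mathbb{N}}$ of $Z^{\mathbf{p}}_c$-atoms and $\lambda\in\ell^p(\mathbb{N})$ such that $f=\sum_{k}\lambda_ka_k$ with convergence in $Z^{\mathbf{p}}$. Moreover $\|f\|_{Z^{\mathbf{p}}}\simeq\inf\|\lambda\|_{\ell^p(\mathbb{N})}$, the infimum taken over all such decompositions.
   Context: Fix $n,N\ge1$; functions on $\mathbb{R}^{1+n}_+:=(0,\infty)\times\mathbb{R}^n$ are $\mathbb{C}^N$-valued. A Whitney parameter is $c=(c_0,c_1)\in(0,\infty)\times(3/2,\infty)$, with Whitney region $\Omega_c(t,x):=(c_1^{-1}t,c_1t)\times B(x,c_0t)$ and $\mathcal{W}_cf(t,x):=\big(|\Omega_c(t,x)|^{-1}\iint_{\Omega_c(t,x)}|f|^2\big)^{1/2}$. For $\mathbf{p}=(p,s)$, $\|f\|_{Z^{\mathbf{p}}}:=\|\mathcal{W}_{(1,2)}(\kappa^{-s}f)\|_{L^p(\mathbb{R}^{1+n}_+,dx\,dt/t)}$ where $\kappa^{-s}f(t,x)=t^{-s}f(t,x)$, and $Z^{\mathbf{p}}$ is the set of $f$ with finite quasinorm. A $Z^{\mathbf{p}}_c$-atom associated with $(t,x)\in\mathbb{R}^{1+n}_+$ is a function $a$ essentially supported in $\Omega_c(t,x)$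 with $\|\kappa^{-s}a\|_{L^2(\Omega_c(t,x),dx\,dt/t)}\le t^{n\delta_{p,2}}$, where $\delta_{p,2}:=\frac12-\frac1p$. *)

theory Defs
  imports "HOL-Analysis.Analysis"
begin

text \<open>Points of the upper half-space are pairs (t, x) with t :: real (t > 0) and
  x :: real^'n; functions take values in complex^'N.\<close>

definition epowr :: "ennreal \<Rightarrow> real \<Rightarrow> ennreal" where
  "epowr x r = (if x = \<infinity> then \<infinity> else ennreal (enn2real x powr r))"

definition whitney_param :: "real \<times> real \<Rightarrow> bool" where
  "whitney_param c \<longleftrightarrow> fst c > 0 \<and> snd c > 3/2"

definition whitney_region :: "real \<times> real \<Rightarrow> real \<times> (real^'n::finite) \<Rightarrow> (real \<times> (real^'n)) set" where
  "whitney_region c z =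
     {w. fst z / snd c < fst w \<and> fst w < snd c * fst z \<and> snd w \<in> ball (snd z) (fst c * fst z)}"

definition whitney_avg :: "real \<times> real \<Rightarrow> (real \<times> (real^'n::finite) \<Rightarrow> 'b::real_normed_vector)
    \<Rightarrow> real \<times> (real^'n) \<Rightarrow> ennreal" where
  "whitney_avg c f z =
     epowr ((\<integral>\<^sup>+ w \<in> whitney_region c z. ennreal ((norm (f w))\<^sup>2) \<partial>lborel)
             / emeasure lborel (whitney_region c z)) (1/2)"

definition kappa :: "real \<Rightarrow> (real \<times> 'a \<Rightarrow> 'b::real_vector) \<Rightarrow> real \<times> 'a \<Rightarrow> 'b" where
  "kappa s f = (\<lambda>w. fst w powr s *\<^sub>R f w)"

definition zp_norm :: "real \<Rightarrow> real \<Rightarrow> (real \<times> (real^'n::finite) \<Rightarrow> 'b::real_normed_vector) \<Rightarrow> ennreal" where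
  "zp_norm p s f =
     epowr (\<integral>\<^sup>+ z \<in> {z. fst z > 0}.
               epowr (whitney_avg (1, 2) (kappa (-s) f) z) p * ennreal (1 / fst z) \<partial>lborel) (1/p)"

definition in_Zp :: "real \<Rightarrow> real \<Rightarrow> (real \<times> (real^'n::finite) \<Rightarrow> 'b::real_normed_vector) \<Rightarrow> bool" where
  "in_Zp p s f \<longleftrightarrow> f \<in> borel_measurable lborel \<and> zp_norm p s f < \<infinity>"

definition Zp_atom_at :: "real \<Rightarrow> real \<Rightarrow> real \<times> real \<Rightarrow> real \<times> (real^'n::finite)
    \<Rightarrow> (real \<times> (real^'n) \<Rightarrow> 'b::real_normed_vector) \<Rightarrow> bool" where
  "Zp_atom_at p s c z a \<longleftrightarrow>
     fst z > 0 \<and> a \<in> borel_measurable lborel \<and>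
     (AE w in lborel. w \<notin> whitney_region c z \<longrightarrow> a w = 0) \<and>
     epowr (\<integral>\<^sup>+ w \<in> whitney_region c z.
              ennreal ((norm (kappa (-s) a w))\<^sup>2) * ennreal (1 / fst w) \<partial>lborel) (1/2)
       \<le> ennreal (fst z powr (real CARD('n) * (1/2 - 1/p)))"

definition Zp_atom :: "real \<Rightarrow> real \<Rightarrow> real \<times> real
    \<Rightarrow> (real \<times> (real^'n::finite) \<Rightarrow> 'b::real_normed_vector) \<Rightarrow> bool" where
  "Zp_atom p s c a \<longleftrightarrow> (\<exists>z. Zp_atom_at p s c z a)"

definition lp_sum :: "real \<Rightarrow> (nat \<Rightarrow> complex) \<Rightarrow> ennreal" where
  "lp_sum p lam = (\<Sum>k. ennreal (norm (lam k) powr p))"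

definition lp_norm :: "real \<Rightarrow> (nat \<Rightarrow> complex) \<Rightarrow> ennreal" where
  "lp_norm p lam = epowr (lp_sum p lam) (1/p)"

definition atomic_decomp :: "real \<Rightarrow> real \<Rightarrow> real \<times> real
    \<Rightarrow> (real \<times> (real^'n::finite) \<Rightarrow> complex^'N::finite)
    \<Rightarrow> (nat \<Rightarrow> complex) \<Rightarrow> (nat \<Rightarrow> real \<times> (real^'n) \<Rightarrow> complex^'N) \<Rightarrow> bool" where
  "atomic_decomp p s c f lam a \<longleftrightarrow>
     (\<forall>k. Zp_atom p s c (a k)) \<and> lp_sum p lam < \<infinity> \<and>
     ((\<lambda>m. zp_norm p s (\<lambda>w. f w - (\<Sum>k<m. lam k *s a k w))) \<longlongrightarrow> 0) sequentially"

definition atomic_norm :: "real \<Rightarrow> real \<Rightarrow> real \<times> real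
    \<Rightarrow> (real \<times> (real^'n::finite) \<Rightarrow> complex^'N::finite) \<Rightarrow> ennreal" where
  "atomic_norm p s c f =
     (INF lam \<in> {lam. \<exists>a. atomic_decomp p s c f lam a}. lp_norm p lam)"

end

theory Submission
  imports Defs
begin

(*
  For p \<le> 1 the p-th power of the Z^p quasinorm is subadditive, as the integral of the p-th power of
  a Whitney average, which is subadditive by Minkowski's inequality. An atom contributes a bounded
  amount: its Whitney average vanishes outside a fixed enlargement of its Whitney region, and the
  normalisation t^(n(1/2 - 1/p)) of atoms makes the bound independent of the scale t.

  Conversely, cut the upper half-space into dyadic cubes so small that each lies in the Whitney
  region of each of its points. The restrictions of f to the cubes, divided by their L^2(dx dt/t)
  norms times t^(-n(1/2 - 1/p)), are atoms; the p-th power of each coefficient is bounded by the part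
  of the Z^p integral of f over its cube, and the remainders of the partial sums tend to zero in Z^p
  by monotone convergence.
*)

section \<open>Real powers of extended nonnegative reals\<close>

lemma powr_add_le_add_powr:
  fixes a b r :: real
  assumes "a \<ge> 0" "b \<ge> 0" "0 < r" "r \<le> 1"
  shows "(a + b) powr r \<le> a powr r + b powr r"
proof (cases "a + b = 0")
  case True then show ?thesis using assms by auto
next
  case False
  then have ab: "a + b > 0" using assms by auto
  have frac_le_powr: "x \<le> x powr r" if "0 \<le> x" "x \<le> 1" for x :: real
    using that assms powr_mono'[of r 1 x] by (cases "x = 0") auto
  have "1 = a / (a+b) + b / (a+b)" using ab by (simp add: add_divide_distrib[symmetric])
  also have "\<dots> \<le> (a / (a+b)) powr r + (b / (a+b)) powr r"
    using ab assms by (intro add_mono frac_le_powr) auto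
  finally have "1 \<le> (a / (a+b)) powr r + (b / (a+b)) powr r" .
  then have "(a+b) powr r * 1 \<le> (a+b) powr r * ((a / (a+b)) powr r + (b / (a+b)) powr r)"
    by (intro mult_left_mono) auto
  also have "\<dots> = a powr r + b powr r"
    using ab assms by (simp add: distrib_left powr_divide)
  finally show ?thesis by simp
qed

lemma epowr_ennreal: "x \<ge> 0 \<Longrightarrow> epowr (ennreal x) r = ennreal (x powr r)"
  by (simp add: epowr_def)

lemma epowr_top[simp]: "epowr top r = top"
  by (simp add: epowr_def)

lemma epowr_zero[simp]: "epowr 0 r = 0"
  by (simp add: epowr_def)

lemma epowr_eq_top_iff[simp]: "epowr x r = top \<longleftrightarrow> x = top"
  by (simp add: epowr_def)

lemma epowr_less_top_iff[simp]: "epowr x r < top \<longleftrightarrow> x < top"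
  by (metis epowr_eq_top_iff top.not_eq_extremum)

lemma epowr_one[simp]: "epowr x 1 = x"
  by (cases x) (auto simp: epowr_def)

lemma epowr_eq_0_iff[simp]: "epowr x r = 0 \<longleftrightarrow> x = 0"
  by (cases x) (auto simp: epowr_def)

lemma epowr_mono: "x \<le> y \<Longrightarrow> r \<ge> 0 \<Longrightarrow> epowr x r \<le> epowr y r"
  by (cases x; cases y) (auto simp: epowr_def top_unique intro!: ennreal_leI powr_mono2)

lemma epowr_epowr: "a > 0 \<Longrightarrow> epowr (epowr x a) b = epowr x (a * b)"
  by (cases x) (auto simp: epowr_def powr_powr)

lemma epowr_mult:
  assumes "r > 0"
  shows "epowr (x * y) r = epowr x r * epowr y r"
proof (cases "x = top \<or> y = top")
  case True
  have nonzero: "epowr u r \<noteq> 0" if "u \<noteq> 0" for u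
    using assms that by (cases u) (auto simp: epowr_def ennreal_eq_0_iff)
  from True show ?thesis
    by (cases "x = 0"; cases "y = 0")
       (auto simp: nonzero ennreal_mult_top ennreal_top_mult)
next
  case False
  then obtain a b where "x = ennreal a" "y = ennreal b" "a \<ge> 0" "b \<ge> 0"
    by (cases x; cases y) auto
  then show ?thesis
    by (simp add: epowr_ennreal powr_mult ennreal_mult[symmetric])
qed

lemma epowr_add_le:
  assumes "0 < r" "r \<le> 1"
  shows "epowr (x + y) r \<le> epowr x r + epowr y r"
proof (cases "x = top \<or> y = top")
  case False
  then obtain a b where "x = ennreal a" "y = ennreal b" "a \<ge> 0" "b \<ge> 0"
    by (cases x; cases y) auto
  then show ?thesis
    using powr_add_le_add_powr[of a b r] assms
    by (simp add: epowr_ennreal ennreal_plus[symmetric] del: ennreal_plus)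
qed auto

lemma epowr_measurable[measurable]:
  "f \<in> borel_measurable M \<Longrightarrow> (\<lambda>x. epowr (f x) r) \<in> borel_measurable M"
  unfolding epowr_def by (intro measurable_If) (auto intro!: measurable_ennreal borel_measurable_enn2real)

lemma tendsto_epowr_zero:
  assumes "(X \<longlongrightarrow> 0) F" "r > 0"
  shows "((\<lambda>m. epowr (X m) r) \<longlongrightarrow> 0) F"
proof (rule order_tendstoI)
  fix y :: ennreal assume "y > 0"
  then obtain e where e: "e > 0" "ennreal e \<le> y"
    by (cases y) (auto intro: that[of 1])
  have "\<forall>\<^sub>F m in F. X m < ennreal (e powr (1/r))"
    using e by (intro order_tendstoD(2)[OF assms(1)]) simp
  then show "\<forall>\<^sub>F m in F. epowr (X m) r < y"
  proof eventually_elim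
    case (elim m)
    then obtain xm where xm: "X m = ennreal xm" "xm \<ge> 0"
      by (cases "X m") auto
    then have "xm powr r < (e powr (1/r)) powr r"
      using elim assms(2) by (intro powr_less_mono2) (auto simp: ennreal_less_iff)
    also have "\<dots> = e" using e assms(2) by (simp add: powr_powr)
    finally show ?case using xm e by (simp add: epowr_ennreal) (metis ennreal_lessI le_less_trans not_le)
  qed
qed simp

section \<open>Whitney regions and averages\<close>

lemma whitney_region_eq_Times:
  "whitney_region c z = {fst z / snd c <..< snd c * fst z} \<times> ball (snd z) (fst c * fst z)"
  unfolding whitney_region_def by auto

lemma sets_whitney_region[measurable]: "whitney_region c z \<in> sets lborel"
  unfolding sets_lborel whitney_region_eq_Times by (intro borel_open open_Times) auto

lemma emeasure_interval_Times_ball: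
  fixes x :: "'a::euclidean_space"
  assumes "a \<le> b" "r \<ge> 0"
  shows "emeasure lborel ({a<..<b} \<times> ball x r) = ennreal ((b - a) * (unit_ball_vol DIM('a) * r ^ DIM('a)))"
proof -
  have "emeasure lborel ({a<..<b} \<times> ball x r) = emeasure lborel {a<..<b} * emeasure lborel (ball x r)"
    unfolding lborel_prod[symmetric] by (rule lborel.emeasure_pair_measure_Times) auto
  then show ?thesis
    using assms emeasure_ball[of r x] by (simp add: ennreal_mult)
qed

lemma emeasure_whitney_region:
  fixes z :: "real \<times> (real^'n::finite)"
  assumes "fst c > 0" "snd c > 1" "fst z > 0"
  shows "emeasure lborel (whitney_region c z) =
    ennreal ((snd c * fst z - fst z / snd c) * (unit_ball_vol CARD('n) * (fst c * fst z) ^ CARD('n)))"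
proof -
  have "fst z / snd c < fst z" "fst z < snd c * fst z"
    using assms by (simp_all add: divide_less_eq)
  then have "fst z / snd c \<le> snd c * fst z" by linarith
  then show ?thesis
    unfolding whitney_region_eq_Times using assms
    by (subst emeasure_interval_Times_ball) auto
qed

lemma sets_whitney_region_graph:
  "{(z, w::real \<times> (real^'n::finite)). w \<in> whitney_region c z} \<in> sets (lborel \<Otimes>\<^sub>M lborel)"
proof -
  have "{(z, w::real \<times> (real^'n)). w \<in> whitney_region c z} =
      {p. fst (snd p) - inverse (snd c) * fst (fst p) > 0} \<inter> {p. snd c * fst (fst p) - fst (snd p) > 0} \<inter>
      {p. fst c * fst (fst p) - dist (snd (fst p)) (snd (snd p)) > 0}"
    by (auto simp: whitney_region_def divide_inverse ac_simps)
  also have "open \<dots>"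
    by (intro open_Int open_Collect_less continuous_intros)
  finally show ?thesis unfolding lborel_prod sets_lborel by (rule borel_open)
qed

lemma measurable_whitney_region_integral[measurable]:
  fixes F :: "real \<times> (real^'n::finite) \<Rightarrow> ennreal"
  assumes [measurable]: "F \<in> borel_measurable lborel"
  shows "(\<lambda>z. \<integral>\<^sup>+ w \<in> whitney_region c z. F w \<partial>lborel) \<in> borel_measurable lborel"
proof -
  let ?G = "{(z, w::real \<times> (real^'n)). w \<in> whitney_region c z}"
  have [measurable]: "?G \<in> sets (lborel \<Otimes>\<^sub>M lborel)"
    by (rule sets_whitney_region_graph)
  have "(\<lambda>z. \<integral>\<^sup>+ w. F w * indicator ?G (z, w) \<partial>lborel) \<in> borel_measurable lborel"
    by (rule lborel.borel_measurable_nn_integral_fst[of "\<lambda>p. F (snd p) * indicator ?G p", simplified])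
       measurable
  moreover have "(\<integral>\<^sup>+ w. F w * indicator ?G (z, w) \<partial>lborel) = (\<integral>\<^sup>+ w \<in> whitney_region c z. F w \<partial>lborel)" for z
    by (auto intro!: nn_integral_cong simp: indicator_def)
  ultimately show ?thesis by simp
qed

lemma measurable_emeasure_whitney_region[measurable]:
  "(\<lambda>z::real \<times> (real^'n::finite). emeasure lborel (whitney_region c z)) \<in> borel_measurable lborel"
  using measurable_whitney_region_integral[of "\<lambda>_. 1" c]
  by (simp add: nn_integral_indicator[OF sets_whitney_region])

lemma measurable_whitney_avg[measurable]:
  fixes g :: "real \<times> (real^'n::finite) \<Rightarrow> 'b::real_normed_vector"
  assumes [measurable]: "g \<in> borel_measurable lborel"
  shows "whitney_avg c g \<in> borel_measurable lborel"
  unfolding whitney_avg_def[abs_def] by measurable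

lemma whitney_region_enlarge:
  assumes "w \<in> whitney_region (1,2) z" "w \<in> whitney_region c z0" "snd c > 0"
  shows "z \<in> whitney_region (fst c + 2 * snd c, 2 * snd c) z0"
proof -
  obtain c0 c1 where c: "c = (c0, c1)" by (cases c)
  obtain t x where z0: "z0 = (t, x)" by (cases z0)
  obtain t' x' where z: "z = (t', x')" by (cases z)
  obtain tau y where w: "w = (tau, y)" by (cases w)
  have h: "t'/2 < tau" "tau < 2*t'" "dist y x' < t'" "t/c1 < tau" "tau < c1 * t" "dist y x < c0 * t" "c1 > 0"
    using assms unfolding c z0 z w whitney_region_def by (auto simp: dist_commute)
  have "t / (2*c1) = (t/c1)/2" by simp
  then have 1: "t / (2*c1) < t'" using h by linarith
  have 2: "t' < 2 * c1 * t" using h by linarith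
  have "dist x' x \<le> dist y x' + dist y x" by (metis dist_commute dist_triangle)
  also have "\<dots> < (c0 + 2*c1) * t" using h 2 by (simp add: algebra_simps)
  finally show ?thesis
    using 1 2 unfolding c z0 z whitney_region_def by (auto simp: dist_commute mult.assoc)
qed

lemma power2_norm_add_le:
  fixes x y :: "'b::real_normed_vector"
  assumes "q > 0"
  shows "(norm (x + y))^2 \<le> (1+q) * (norm x)^2 + (1 + 1/q) * (norm y)^2"
proof -
  have "0 \<le> (q * norm x - norm y)^2 / q" using assms by simp
  then have am_gm: "2 * norm x * norm y \<le> q * (norm x)^2 + (norm y)^2 / q"
    using assms by (simp add: power2_diff field_simps power2_eq_square)
  have "(norm (x+y))^2 \<le> (norm x + norm y)^2"
    by (intro power_mono norm_triangle_ineq) auto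
  also have "\<dots> \<le> (1+q) * (norm x)^2 + (1 + 1/q) * (norm y)^2"
    using am_gm by (simp add: power2_sum field_simps)
  finally show ?thesis .
qed

lemma nn_integral_norm_sq_add_eq_if_zero:
  fixes g h :: "'a \<Rightarrow> 'b::real_normed_vector"
  assumes [measurable]: "g \<in> borel_measurable M" "\<rho> \<in> borel_measurable M"
    and zero: "(\<integral>\<^sup>+ w. ennreal ((norm (g w))^2) * \<rho> w \<partial>M) = 0"
  shows "(\<integral>\<^sup>+ w. ennreal ((norm (g w + h w))^2) * \<rho> w \<partial>M) = (\<integral>\<^sup>+ w. ennreal ((norm (h w))^2) * \<rho> w \<partial>M)"
proof -
  have "AE w in M. ennreal ((norm (g w))^2) * \<rho> w = 0"
    using zero by (subst nn_integral_0_iff_AE[symmetric]) auto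
  then show ?thesis by (intro nn_integral_cong_AE) (auto elim!: eventually_mono)
qed

lemma nn_integral_norm_sq_Minkowski:
  fixes g h :: "'a \<Rightarrow> 'b::real_normed_vector" and \<rho> :: "'a \<Rightarrow> ennreal"
  assumes [measurable]: "g \<in> borel_measurable M" "h \<in> borel_measurable M" "\<rho> \<in> borel_measurable M"
  shows "epowr (\<integral>\<^sup>+ w. ennreal ((norm (g w + h w))^2) * \<rho> w \<partial>M) (1/2)
     \<le> epowr (\<integral>\<^sup>+ w. ennreal ((norm (g w))^2) * \<rho> w \<partial>M) (1/2)
      + epowr (\<integral>\<^sup>+ w. ennreal ((norm (h w))^2) * \<rho> w \<partial>M) (1/2)"
    (is "epowr ?C _ \<le> epowr ?A _ + epowr ?B _")
proof (cases "?A = top \<or> ?B = top")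
  case True then show ?thesis by auto
next
  case False
  then obtain a b where ab: "?A = ennreal a" "?B = ennreal b" "a \<ge> 0" "b \<ge> 0"
    by (cases ?A; cases ?B) auto
  consider "a = 0" | "b = 0" | "a > 0" "b > 0" using ab by linarith
  then show ?thesis
  proof cases
    case 1
    then show ?thesis using nn_integral_norm_sq_add_eq_if_zero[of g M \<rho> h] ab by simp
  next
    case 2
    then show ?thesis using nn_integral_norm_sq_add_eq_if_zero[of h M \<rho> g] ab by (simp add: add.commute)
  next
    case 3
    text \<open>The weight \<open>q\<close> in \<open>power2_norm_add_le\<close> is chosen to balance the two integrals.\<close>
    define q where "q = sqrt b / sqrt a"
    have q: "q > 0" using 3 by (simp add: q_def)
    have "ennreal ((norm (g w + h w))^2) * \<rho> w \<le> ennreal (1+q) * (ennreal ((norm (g w))^2) * \<rho> w)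
                      + ennreal (1+1/q) * (ennreal ((norm (h w))^2) * \<rho> w)" for w
    proof -
      have "ennreal ((norm (g w + h w))^2)
          \<le> ennreal (1+q) * ennreal ((norm (g w))^2) + ennreal (1 + 1/q) * ennreal ((norm (h w))^2)"
        using power2_norm_add_le[OF q, of "g w" "h w"] q
        by (simp add: ennreal_mult[symmetric] ennreal_plus[symmetric] ennreal_leI del: ennreal_plus)
      then show ?thesis by (metis (no_types, lifting) distrib_right mult.assoc mult_right_mono zero_le)
    qed
    then have "?C \<le> ennreal (1+q) * ?A + ennreal (1+1/q) * ?B"
      by (subst nn_integral_cmult[symmetric] nn_integral_add[symmetric], simp_all)+ (intro nn_integral_mono)
    also have "\<dots> = ennreal ((1+q) * a + (1+1/q) * b)"
      using ab q by (simp add: ennreal_mult ennreal_plus)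
    also have "(1+q) * a + (1+1/q) * b = (sqrt a + sqrt b)^2"
      using 3 by (simp add: q_def field_simps power2_eq_square real_sqrt_mult[symmetric])
    finally have "epowr ?C (1/2) \<le> epowr (ennreal ((sqrt a + sqrt b)^2)) (1/2)"
      by (rule epowr_mono) simp
    then show ?thesis
      using ab by (simp add: epowr_ennreal powr_half_sqrt ennreal_plus[symmetric] del: ennreal_plus)
  qed
qed

lemma whitney_avg_eq_nn_integral:
  fixes g :: "real \<times> (real^'n::finite) \<Rightarrow> 'b::real_normed_vector"
  assumes [measurable]: "g \<in> borel_measurable lborel"
  shows "whitney_avg c g z = epowr (\<integral>\<^sup>+ w. ennreal ((norm (g w))^2) *
      (indicator (whitney_region c z) w * inverse (emeasure lborel (whitney_region c z))) \<partial>lborel) (1/2)"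
  unfolding whitney_avg_def divide_ennreal_def
  by (subst nn_integral_multc[symmetric]) (simp_all add: mult.assoc)

lemma whitney_avg_add_le:
  fixes g h :: "real \<times> (real^'n::finite) \<Rightarrow> 'b::{real_normed_vector, second_countable_topology}"
  assumes [measurable]: "g \<in> borel_measurable lborel" "h \<in> borel_measurable lborel"
  shows "whitney_avg c (\<lambda>w. g w + h w) z \<le> whitney_avg c g z + whitney_avg c h z"
proof -
  have gh: "(\<lambda>w. g w + h w) \<in> borel_measurable lborel" by measurable
  show ?thesis
    unfolding whitney_avg_eq_nn_integral[OF assms(1)] whitney_avg_eq_nn_integral[OF assms(2)]
      whitney_avg_eq_nn_integral[OF gh]
    by (intro nn_integral_norm_sq_Minkowski) measurable
qed

lemma whitney_avg_scale:
  fixes g h :: "real \<times> (real^'n::finite) \<Rightarrow> 'b::real_normed_vector"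
  assumes [measurable]: "g \<in> borel_measurable lborel" "h \<in> borel_measurable lborel"
    and k: "k \<ge> 0" "\<And>w. norm (h w) = k * norm (g w)"
  shows "whitney_avg c h z = ennreal k * whitney_avg c g z"
proof -
  let ?r = "\<lambda>w. indicator (whitney_region c z) w * inverse (emeasure lborel (whitney_region c z))"
  have "(\<integral>\<^sup>+ w. ennreal ((norm (h w))^2) * ?r w \<partial>lborel)
      = (\<integral>\<^sup>+ w. ennreal (k^2) * (ennreal ((norm (g w))^2) * ?r w) \<partial>lborel)"
    using k by (intro nn_integral_cong) (simp add: power_mult_distrib ennreal_mult mult.assoc)
  also have "\<dots> = ennreal (k^2) * (\<integral>\<^sup>+ w. ennreal ((norm (g w))^2) * ?r w \<partial>lborel)"
    by (rule nn_integral_cmult) measurable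
  finally show ?thesis
    unfolding whitney_avg_eq_nn_integral[OF assms(1)] whitney_avg_eq_nn_integral[OF assms(2)]
    using k by (simp add: epowr_mult epowr_ennreal powr_half_sqrt)
qed

lemma whitney_avg_mono:
  assumes "\<And>w. w \<in> whitney_region c z \<Longrightarrow> norm (g w) \<le> norm (h w)"
  shows "whitney_avg c g z \<le> whitney_avg c h z"
  unfolding whitney_avg_def
proof (intro epowr_mono divide_right_mono_ennreal nn_integral_mono)
  fix w show "ennreal ((norm (g w))\<^sup>2) * indicator (whitney_region c z) w
          \<le> ennreal ((norm (h w))\<^sup>2) * indicator (whitney_region c z) w"
    using assms[of w] by (cases "w \<in> whitney_region c z") (auto intro!: ennreal_leI power_mono)
qed simp

lemma whitney_avg_cong_AE:
  assumes "AE w in lborel. w \<in> whitney_region c z \<longrightarrow> norm (g w) = norm (h w)"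
  shows "whitney_avg c g z = whitney_avg c h z"
  unfolding whitney_avg_def using assms
  by (subst nn_integral_cong_AE[where v = "\<lambda>w. ennreal ((norm (h w))\<^sup>2) * indicator (whitney_region c z) w"])
     (auto simp: indicator_def elim!: eventually_mono)

lemma whitney_avg_zero[simp]: "whitney_avg c (\<lambda>_. 0) z = 0"
  unfolding whitney_avg_def by simp

section \<open>The \<open>Z\<^sup>p\<close> integral\<close>

lemma measurable_fst_lborel[measurable]: "(fst :: real \<times> 'a::euclidean_space \<Rightarrow> real) \<in> borel_measurable lborel"
  by (simp add: borel_measurable_continuous_onI continuous_on_fst)

lemma kappa_measurable[measurable]:
  fixes f :: "real \<times> 'a::euclidean_space \<Rightarrow> 'b::{real_normed_vector, second_countable_topology}"
  assumes [measurable]: "f \<in> borel_measurable lborel"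
  shows "kappa s f \<in> borel_measurable lborel"
  unfolding kappa_def by measurable

lemma kappa_add: "kappa s (\<lambda>w. f w + g w) = (\<lambda>w. kappa s f w + kappa s g w)"
  unfolding kappa_def by (simp add: scaleR_right_distrib)

text \<open>The \<open>p\<close>-th power of the \<open>Z\<^sup>p\<close> quasinorm, which is subadditive for \<open>p \<le> 1\<close>.\<close>

definition zp_integral :: "real \<Rightarrow> real \<Rightarrow> (real \<times> (real^'n::finite) \<Rightarrow> 'b::real_normed_vector) \<Rightarrow> ennreal" where
  "zp_integral p s f = (\<integral>\<^sup>+ z \<in> {z. fst z > 0}.
     epowr (whitney_avg (1, 2) (kappa (-s) f) z) p * ennreal (1 / fst z) \<partial>lborel)"

lemma zp_norm_eq_epowr: "zp_norm p s f = epowr (zp_integral p s f) (1/p)"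
  unfolding zp_norm_def zp_integral_def ..

lemma zp_integral_eq_epowr: "p > 0 \<Longrightarrow> zp_integral p s f = epowr (zp_norm p s f) p"
  by (simp add: zp_norm_eq_epowr epowr_epowr)

lemma zp_integral_cong_AE:
  assumes "AE w in lborel. norm (f w) = norm (g w)"
  shows "zp_integral p s f = zp_integral p s g"
proof -
  have "whitney_avg (1,2) (kappa (-s) f) z = whitney_avg (1,2) (kappa (-s) g) z" for z
    using assms by (intro whitney_avg_cong_AE) (auto simp: kappa_def elim!: eventually_mono)
  then show ?thesis unfolding zp_integral_def by simp
qed

lemma zp_integral_zero[simp]: "zp_integral p s (\<lambda>_. 0) = 0"
  by (simp add: zp_integral_def kappa_def)

lemma zp_integral_add_le:
  fixes f g :: "real \<times> (real^'n::finite) \<Rightarrow> 'b::{real_normed_vector, second_countable_topology}"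
  assumes [measurable]: "f \<in> borel_measurable lborel" "g \<in> borel_measurable lborel"
    and p: "0 < p" "p \<le> 1"
  shows "zp_integral p s (\<lambda>w. f w + g w) \<le> zp_integral p s f + zp_integral p s g"
proof -
  let ?I = "\<lambda>f z. epowr (whitney_avg (1, 2) (kappa (-s) f) z) p * ennreal (1 / fst z) * indicator {z. fst z > 0} z"
  have "?I (\<lambda>w. f w + g w) z \<le> ?I f z + ?I g z" for z
  proof -
    have "epowr (whitney_avg (1, 2) (kappa (- s) (\<lambda>w. f w + g w)) z) p
        \<le> epowr (whitney_avg (1, 2) (kappa (-s) f) z + whitney_avg (1, 2) (kappa (-s) g) z) p"
      unfolding kappa_add using p by (intro epowr_mono whitney_avg_add_le) auto
    also have "\<dots> \<le> epowr (whitney_avg (1, 2) (kappa (-s) f) z) p + epowr (whitney_avg (1, 2) (kappa (-s) g) z) p"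
      using p by (rule epowr_add_le)
    finally show ?thesis
      by (auto simp: distrib_right[symmetric] intro!: mult_right_mono)
  qed
  then have "zp_integral p s (\<lambda>w. f w + g w) \<le> (\<integral>\<^sup>+ z. ?I f z + ?I g z \<partial>lborel)"
    unfolding zp_integral_def by (intro nn_integral_mono)
  also have "\<dots> = zp_integral p s f + zp_integral p s g"
    unfolding zp_integral_def by (rule nn_integral_add) measurable
  finally show ?thesis .
qed

lemma zp_integral_sum_le:
  fixes g :: "nat \<Rightarrow> real \<times> (real^'n::finite) \<Rightarrow> 'b::{real_normed_vector, second_countable_topology}"
  assumes [measurable]: "\<And>k. g k \<in> borel_measurable lborel" and p: "0 < p" "p \<le> 1"
  shows "zp_integral p s (\<lambda>w. \<Sum>k<m. g k w) \<le> (\<Sum>k<m. zp_integral p s (g k))"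
proof (induction m)
  case (Suc m)
  have "zp_integral p s (\<lambda>w. \<Sum>k<Suc m. g k w) = zp_integral p s (\<lambda>w. (\<Sum>k<m. g k w) + g m w)"
    by simp
  also have "\<dots> \<le> zp_integral p s (\<lambda>w. \<Sum>k<m. g k w) + zp_integral p s (g m)"
    using p by (intro zp_integral_add_le) measurable
  also have "\<dots> \<le> (\<Sum>k<m. zp_integral p s (g k)) + zp_integral p s (g m)"
    using Suc by (rule add_right_mono)
  finally show ?case by simp
qed simp

lemma norm_vector_scalar_mult: "norm (x *s (v::'a::real_normed_field^'N::finite)) = norm x * norm v"
  by (simp add: norm_vec_def norm_mult L2_set_right_distrib)

lemma measurable_vector_scalar_mult[measurable]:
  assumes "g \<in> borel_measurable M"
  shows "(\<lambda>w. (x::complex) *s (g w :: complex^'N::finite)) \<in> borel_measurable M"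
proof -
  have "(\<lambda>v::complex^'N. x *s v) = (\<lambda>v. \<chi> i. x * v$i)" by (auto simp: vec_eq_iff)
  moreover have "continuous_on UNIV (\<lambda>v::complex^'N. \<chi> i. x * v$i)"
    by (intro continuous_intros)
  ultimately have "(\<lambda>v::complex^'N. x *s v) \<in> borel_measurable borel"
    by (simp add: borel_measurable_continuous_onI)
  then show ?thesis using assms by (rule measurable_compose[rotated])
qed

lemma zp_integral_scale:
  fixes a :: "real \<times> (real^'n::finite) \<Rightarrow> complex^'N::finite"
  assumes [measurable]: "a \<in> borel_measurable lborel" and p: "p > 0"
  shows "zp_integral p s (\<lambda>w. x *s a w) = ennreal (norm x powr p) * zp_integral p s a"
proof -
  have "whitney_avg (1,2) (kappa (-s) (\<lambda>w. x *s a w)) z = ennreal (norm x) * whitney_avg (1,2) (kappa (-s) a) z" for z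
    by (rule whitney_avg_scale) (auto simp: kappa_def norm_vector_scalar_mult)
  then show ?thesis
    unfolding zp_integral_def using p
    by (subst nn_integral_cmult[symmetric]) (simp_all add: epowr_mult epowr_ennreal mult.assoc)
qed

section \<open>Atomic decompositions bound the \<open>Z\<^sup>p\<close> quasinorm\<close>

lemma whitney_avg_atom_eq_0:
  fixes a :: "real \<times> (real^'n::finite) \<Rightarrow> 'b::real_normed_vector"
  assumes "AE w in lborel. w \<notin> whitney_region c z0 \<longrightarrow> a w = 0" "snd c > 0"
    and "z \<notin> whitney_region (fst c + 2 * snd c, 2 * snd c) z0"
  shows "whitney_avg (1,2) (kappa s a) z = 0"
proof -
  have "AE w in lborel. w \<in> whitney_region (1,2) z \<longrightarrow> norm (kappa s a w) = norm (0::'b)"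
    using assms(1)
  proof eventually_elim
    case (elim w)
    show ?case using elim whitney_region_enlarge[of w z c z0] assms(2,3) by (auto simp: kappa_def)
  qed
  then show ?thesis
    using whitney_avg_cong_AE[of "(1,2)" z "kappa s a" "\<lambda>_. 0::'b"] by simp
qed

lemma nn_integral_whitney_region_le_weighted:
  assumes "fst c > 0" "snd c > 1" "fst z > 0" and [measurable]: "F \<in> borel_measurable lborel"
  shows "(\<integral>\<^sup>+ w \<in> whitney_region c z. F w \<partial>lborel)
    \<le> ennreal (snd c * fst z) * (\<integral>\<^sup>+ w \<in> whitney_region c z. F w * ennreal (1 / fst w) \<partial>lborel)"
proof -
  have "F w * indicator (whitney_region c z) w
      \<le> ennreal (snd c * fst z) * (F w * ennreal (1 / fst w) * indicator (whitney_region c z) w)" for w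
  proof (cases "w \<in> whitney_region c z")
    case True
    then have "fst z / snd c < fst w" "fst w < snd c * fst z" by (auto simp: whitney_region_def)
    moreover have "fst z / snd c > 0" using assms by simp
    ultimately have "fst w > 0" "1 \<le> snd c * fst z * (1 / fst w)" by (simp_all add: field_simps)
    then have "ennreal 1 \<le> ennreal (snd c * fst z) * ennreal (1 / fst w)"
      using assms by (simp add: ennreal_mult[symmetric] del: ennreal_1)
    then have "F w * 1 \<le> F w * (ennreal (snd c * fst z) * ennreal (1 / fst w))"
      by (intro mult_left_mono) auto
    then show ?thesis using True by (simp add: ac_simps)
  qed simp
  then show ?thesis
    by (subst nn_integral_cmult[symmetric]) (auto intro!: nn_integral_mono)
qed

lemma whitney_avg_atom_le:
  fixes a :: "real \<times> (real^'n::finite) \<Rightarrow> 'b::{real_normed_vector, second_countable_topology}"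
  assumes c: "fst c > 0" "snd c > 1" and t: "fst z0 > 0"
    and [measurable]: "a \<in> borel_measurable lborel"
    and supp: "AE w in lborel. w \<notin> whitney_region c z0 \<longrightarrow> a w = 0"
    and energy: "(\<integral>\<^sup>+ w \<in> whitney_region c z0. ennreal ((norm (kappa (-s) a w))\<^sup>2) * ennreal (1 / fst w) \<partial>lborel) \<le> ennreal B"
    and B: "B \<ge> 0"
    and u: "u = fst z0 / (2 * snd c)" and z: "fst z \<ge> u"
  shows "whitney_avg (1,2) (kappa (-s) a) z \<le>
     epowr (ennreal (snd c * fst z0 * B / ((3/2) * unit_ball_vol CARD('n) * u ^ (CARD('n) + 1)))) (1/2)"
proof -
  define L where "L = (3/2) * unit_ball_vol CARD('n) * u ^ (CARD('n) + 1)"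
  have u_pos: "u > 0" using t c by (simp add: u)
  then have L_pos: "L > 0" by (simp add: L_def)
  let ?F = "\<lambda>w. ennreal ((norm (kappa (-s) a w))\<^sup>2)"
  have "(\<integral>\<^sup>+ w \<in> whitney_region (1,2) z. ?F w \<partial>lborel) \<le> (\<integral>\<^sup>+ w \<in> whitney_region c z0. ?F w \<partial>lborel)"
    using supp by (intro nn_integral_mono_AE) (auto simp: indicator_def kappa_def elim!: eventually_mono)
  also have "\<dots> \<le> ennreal (snd c * fst z0) *
      (\<integral>\<^sup>+ w \<in> whitney_region c z0. ?F w * ennreal (1 / fst w) \<partial>lborel)"
    by (rule nn_integral_whitney_region_le_weighted[OF c t]) measurable
  also have "\<dots> \<le> ennreal (snd c * fst z0) * ennreal B"
    using energy by (rule mult_left_mono) simp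
  finally have N: "(\<integral>\<^sup>+ w \<in> whitney_region (1,2) z. ?F w \<partial>lborel) \<le> ennreal (snd c * fst z0 * B)"
    using c t B by (simp add: ennreal_mult)
  have D: "emeasure lborel (whitney_region (1,2) z) = ennreal ((3/2) * unit_ball_vol CARD('n) * fst z ^ (CARD('n) + 1))"
    using emeasure_whitney_region[of "(1::real,2::real)" z] u_pos z by simp
  have "fst z > 0" using u_pos z by linarith
  have L_le: "L \<le> (3/2) * unit_ball_vol CARD('n) * fst z ^ (CARD('n) + 1)"
    unfolding L_def using z u_pos by (intro mult_left_mono power_mono) auto
  have "ennreal (snd c * fst z0 * B) / emeasure lborel (whitney_region (1,2) z)
      = ennreal (snd c * fst z0 * B / ((3/2) * unit_ball_vol CARD('n) * fst z ^ (CARD('n) + 1)))"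
    unfolding D using \<open>fst z > 0\<close> B c t by (intro divide_ennreal) auto
  also have "\<dots> \<le> ennreal (snd c * fst z0 * B / L)"
    using L_pos L_le B c t \<open>fst z > 0\<close> by (intro ennreal_leI divide_left_mono) auto
  finally have "ennreal (snd c * fst z0 * B) / emeasure lborel (whitney_region (1,2) z) \<le> ennreal (snd c * fst z0 * B / L)" .
  then show ?thesis
    unfolding whitney_avg_def L_def[symmetric]
    by (intro epowr_mono order_trans[OF divide_right_mono_ennreal[OF N]]) auto
qed

text \<open>The powers of \<open>t\<close> cancel exactly because of the normalisation \<open>t\<^sup>n\<^sup>\<delta>\<close> of atoms, so that the
  bound on the \<open>Z\<^sup>p\<close> size of an atom does not depend on its scale.\<close>

lemma atom_bound_scale_invariant:
  fixes t c0 c1 \<omega> p :: real and n :: nat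
  assumes t: "t > 0" and c1: "c1 > 0" and \<omega>: "\<omega> > 0" and p: "p > 0"
  defines "u \<equiv> t / (2 * c1)"
  shows "(c1 * t * t powr (2 * (real n * (1/2 - 1/p))) / ((3/2) * \<omega> * u ^ (n + 1))) powr (p/2)
      * (1/u) * ((2*c1*t - t/(2*c1)) * (\<omega> * ((c0+2*c1)*t)^n))
   = (c1*(2*c1)^(n+1)/((3/2)*\<omega>)) powr (p/2) * (2*c1) * ((2*c1 - 1/(2*c1)) * \<omega> * (c0+2*c1)^n)"
proof -
  define A where "A = c1*(2*c1)^(n+1)/((3/2)*\<omega>)"
  have A: "A > 0" using c1 \<omega> by (simp add: A_def)
  have hu: "(3/2) * \<omega> * u ^ (n + 1) = (3/2) * \<omega> * t ^ (n + 1) / (2*c1) ^ (n + 1)"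
    by (simp add: u_def power_divide)
  have "c1 * t * t powr (2 * (real n * (1/2 - 1/p))) / ((3/2) * \<omega> * u ^ (n + 1))
      = c1 * (t * t powr (2 * (real n * (1/2 - 1/p)))) / ((3/2) * \<omega> * t ^ (n + 1) / (2*c1) ^ (n + 1))"
    unfolding hu by (simp add: mult.assoc)
  also have "\<dots> = A * ((t * t powr (2 * (real n * (1/2 - 1/p)))) / t ^ (n + 1))"
    using c1 \<omega> t by (simp add: A_def field_simps)
  also have "(t * t powr (2 * (real n * (1/2 - 1/p)))) / t ^ (n + 1) = t powr (- (2 * real n / p))"
  proof -
    have "t * t powr (2 * (real n * (1/2 - 1/p))) = t powr (1 + 2 * (real n * (1/2 - 1/p)))"
      using t by (simp add: powr_add)
    moreover have "t ^ (n + 1) = t powr (real n + 1)"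
      using powr_realpow[OF t, of "n+1"] by (simp add: add.commute)
    ultimately show ?thesis
      using t p by (simp add: powr_diff[symmetric] field_simps)
  qed
  finally have V: "(c1 * t * t powr (2 * (real n * (1/2 - 1/p))) / ((3/2) * \<omega> * u ^ (n + 1))) powr (p/2)
      = A powr (p/2) * t powr (- real n)"
    using A t p by (simp add: powr_mult powr_powr)
  have "t powr (- real n) * (1/u) * ((2*c1*t - t/(2*c1)) * (\<omega> * ((c0+2*c1)*t)^n))
      = (t powr (- real n) * t ^ n) * ((2*c1/t) * (2*c1*t - t/(2*c1))) * \<omega> * (c0+2*c1)^n"
    by (simp add: u_def power_mult_distrib ac_simps)
  also have "\<dots> = (2*c1) * (2*c1 - 1/(2*c1)) * \<omega> * (c0+2*c1)^n"
    using t c1 by (simp add: powr_minus powr_realpow field_simps)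
  finally have scale_free: "t powr (- real n) * (1/u) * ((2*c1*t - t/(2*c1)) * (\<omega> * ((c0+2*c1)*t)^n))
      = (2*c1) * (2*c1 - 1/(2*c1)) * \<omega> * (c0+2*c1)^n" .
  have "A powr (p/2) * t powr (- real n) * (1/u) * ((2*c1*t - t/(2*c1)) * (\<omega> * ((c0+2*c1)*t)^n))
      = A powr (p/2) * (t powr (- real n) * (1/u) * ((2*c1*t - t/(2*c1)) * (\<omega> * ((c0+2*c1)*t)^n)))"
    by (simp only: mult.assoc)
  also have "\<dots> = A powr (p/2) * (2*c1) * ((2*c1 - 1/(2*c1)) * \<omega> * (c0+2*c1)^n)"
    unfolding scale_free by (simp only: mult.assoc)
  finally show ?thesis
    unfolding V A_def[symmetric] .
qed

definition atom_constant :: "real \<Rightarrow> real \<times> real \<Rightarrow> nat \<Rightarrow> real" where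
  "atom_constant p c n = (snd c * (2 * snd c)^(n+1) / ((3/2) * unit_ball_vol n)) powr (p/2) * (2 * snd c)
     * ((2 * snd c - 1 / (2 * snd c)) * unit_ball_vol n * (fst c + 2 * snd c)^n)"

lemma atom_constant_pos:
  assumes "whitney_param c"
  shows "atom_constant p c n > 0"
proof -
  have "1 / (2 * snd c) < 1" "1 < 2 * snd c" using assms by (auto simp: whitney_param_def)
  then have "1 / (2 * snd c) < 2 * snd c" by linarith
  moreover have "unit_ball_vol (real n) \<noteq> 0"
    using unit_ball_vol_pos[of "real n"] by linarith
  ultimately show ?thesis
    using assms unfolding atom_constant_def whitney_param_def by (auto intro!: mult_pos_pos)
qed

lemma zp_integrand_atom_le:
  fixes a :: "real \<times> (real^'n::finite) \<Rightarrow> 'b::{real_normed_vector, second_countable_topology}"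
  assumes wp: "whitney_param c" and p: "0 < p" and atom: "Zp_atom_at p s c z0 a"
  defines "u \<equiv> fst z0 / (2 * snd c)"
    and "V \<equiv> snd c * fst z0 * fst z0 powr (2 * (real CARD('n) * (1/2 - 1/p)))
      / ((3/2) * unit_ball_vol CARD('n) * (fst z0 / (2 * snd c)) ^ (CARD('n) + 1))"
  shows "epowr (whitney_avg (1, 2) (kappa (-s) a) z) p * ennreal (1 / fst z) * indicator {z. 0 < fst z} z
    \<le> ennreal (V powr (p/2)) * ennreal (1/u) * indicator (whitney_region (fst c + 2 * snd c, 2 * snd c) z0) z"
proof -
  define B where "B = fst z0 powr (2 * (real CARD('n) * (1/2 - 1/p)))"
  have c: "fst c > 0" "snd c > 3/2" using wp by (auto simp: whitney_param_def)
  have t: "fst z0 > 0" and [measurable]: "a \<in> borel_measurable lborel"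
    and supp: "AE w in lborel. w \<notin> whitney_region c z0 \<longrightarrow> a w = 0"
    and energy: "epowr (\<integral>\<^sup>+ w \<in> whitney_region c z0. ennreal ((norm (kappa (-s) a w))\<^sup>2) * ennreal (1 / fst w) \<partial>lborel) (1/2)
       \<le> ennreal (fst z0 powr (real CARD('n) * (1/2 - 1/p)))"
    using atom unfolding Zp_atom_at_def by auto
  have u: "u > 0" using t c by (simp add: u_def)
  have V: "V \<ge> 0" using u t c by (simp add: V_def)
  show ?thesis
  proof (cases "z \<in> whitney_region (fst c + 2 * snd c, 2 * snd c) z0")
    case False
    then show ?thesis using whitney_avg_atom_eq_0[OF supp] c by simp
  next
    case True
    then have zu: "u < fst z" by (simp add: whitney_region_def u_def)
    have "(\<integral>\<^sup>+ w \<in> whitney_region c z0. ennreal ((norm (kappa (-s) a w))\<^sup>2) * ennreal (1 / fst w) \<partial>lborel)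
        \<le> ennreal B"
      using epowr_mono[OF energy, of 2] by (simp add: epowr_epowr epowr_ennreal B_def powr_powr mult.commute)
    then have "whitney_avg (1, 2) (kappa (-s) a) z \<le> epowr (ennreal V) (1/2)"
      using whitney_avg_atom_le[of c z0 a s B u z] c t supp zu by (simp add: u_def V_def B_def)
    then have "epowr (whitney_avg (1, 2) (kappa (-s) a) z) p \<le> ennreal (V powr (p/2))"
      using epowr_mono[of _ _ p] p V by (fastforce simp: epowr_epowr epowr_ennreal powr_powr)
    moreover have "ennreal (1 / fst z) \<le> ennreal (1/u)"
      using zu u by (intro ennreal_leI) (simp add: frac_le)
    ultimately have "epowr (whitney_avg (1, 2) (kappa (-s) a) z) p * ennreal (1 / fst z)
        \<le> ennreal (V powr (p/2)) * ennreal (1/u)"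
      by (intro mult_mono) auto
    moreover have "fst z > 0" using zu u by linarith
    ultimately show ?thesis using True by simp
  qed
qed

lemma zp_integral_atom_le:
  fixes a :: "real \<times> (real^'n::finite) \<Rightarrow> 'b::{real_normed_vector, second_countable_topology}"
  assumes wp: "whitney_param c" and p: "0 < p" and atom: "Zp_atom_at p s c z0 a"
  shows "zp_integral p s a \<le> ennreal (atom_constant p c CARD('n))"
proof -
  define t where "t = fst z0"
  define c0 where "c0 = fst c"
  define c1 where "c1 = snd c"
  define n where "n = CARD('n)"
  define \<omega> where "\<omega> = unit_ball_vol n"
  define u where "u = t / (2 * c1)"
  define V where "V = c1 * t * t powr (2 * (real n * (1/2 - 1/p))) / ((3/2) * \<omega> * u ^ (n + 1))"
  define c' where "c' = (c0 + 2 * c1, 2 * c1)"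
  have c: "c0 > 0" "c1 > 3/2" using wp by (auto simp: whitney_param_def c0_def c1_def)
  have \<omega>: "\<omega> > 0" by (simp add: \<omega>_def)
  have t: "t > 0" using atom by (simp add: Zp_atom_at_def t_def)
  have u: "u > 0" using t c by (simp add: u_def)
  have "zp_integral p s a \<le> (\<integral>\<^sup>+ z. ennreal (V powr (p/2)) * ennreal (1/u) * indicator (whitney_region c' z0) z \<partial>lborel)"
    unfolding zp_integral_def using zp_integrand_atom_le[OF wp p atom]
    by (intro nn_integral_mono) (simp add: V_def u_def t_def c0_def c1_def c'_def n_def \<omega>_def)
  also have "\<dots> = ennreal (V powr (p/2)) * ennreal (1/u) * emeasure lborel (whitney_region c' z0)"
    by (rule nn_integral_cmult_indicator) (rule sets_whitney_region)
  also have "emeasure lborel (whitney_region c' z0) = ennreal ((2*c1*t - t/(2*c1)) * (\<omega> * ((c0+2*c1)*t)^n))"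
    using emeasure_whitney_region[of c' z0] c t by (simp add: c'_def t_def n_def \<omega>_def)
  also have "ennreal (V powr (p/2)) * ennreal (1/u) * \<dots>
      = ennreal (V powr (p/2) * (1/u) * ((2*c1*t - t/(2*c1)) * (\<omega> * ((c0+2*c1)*t)^n)))"
  proof -
    have "t/(2*c1) < t" "t < 2*c1*t" using t c by (simp_all add: divide_less_eq)
    then have "t/(2*c1) \<le> 2*c1*t" by linarith
    then have "0 \<le> (2*c1*t - t/(2*c1)) * (\<omega> * ((c0+2*c1)*t)^n)"
      using \<omega> c t by (intro mult_nonneg_nonneg) auto
    moreover have "0 \<le> V powr (p/2)" "0 \<le> 1/u" using u by simp_all
    ultimately show ?thesis by (simp only: ennreal_mult[symmetric] mult_nonneg_nonneg)
  qed
  also have "V powr (p/2) * (1/u) * ((2*c1*t - t/(2*c1)) * (\<omega> * ((c0+2*c1)*t)^n)) = atom_constant p c CARD('n)"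
    unfolding V_def u_def atom_constant_def c0_def c1_def \<omega>_def n_def
    using c t p by (intro atom_bound_scale_invariant) (auto simp: c1_def)
  finally show ?thesis by simp
qed

text \<open>Since \<open>zp_integral\<close> is subadditive and each atom contributes at most \<open>atom_constant\<close>, any
  partial sum of a decomposition is controlled by \<open>\<Sum>|\<lambda>\<^sub>k|\<^sup>p\<close>, and the remainder vanishes in the limit.\<close>

lemma zp_integral_le_atomic_decomp:
  fixes f :: "real \<times> (real^'n::finite) \<Rightarrow> complex^'N::finite"
  assumes wp: "whitney_param c" and p: "0 < p" "p \<le> 1"
    and [measurable]: "f \<in> borel_measurable lborel"
    and dec: "atomic_decomp p s c f lam a"
  shows "zp_integral p s f \<le> ennreal (atom_constant p c CARD('n)) * lp_sum p lam"
proof -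
  define K where "K = atom_constant p c CARD('n)"
  define r where "r m = (\<lambda>w. f w - (\<Sum>k<m. lam k *s a k w))" for m
  have atoms: "\<exists>z. Zp_atom_at p s c z (a k)" for k
    using dec unfolding atomic_decomp_def Zp_atom_def by auto
  then have [measurable]: "a k \<in> borel_measurable lborel" for k
    unfolding Zp_atom_at_def by blast
  have atom_le: "zp_integral p s (a k) \<le> ennreal K" for k
    using atoms zp_integral_atom_le[OF wp p(1)] unfolding K_def by blast
  have "(\<lambda>m. epowr (zp_norm p s (r m)) p) \<longlonglongrightarrow> 0"
    using dec p unfolding atomic_decomp_def r_def by (intro tendsto_epowr_zero) auto
  then have r_tendsto: "(\<lambda>m. zp_integral p s (r m)) \<longlonglongrightarrow> 0"
    using p by (simp add: zp_integral_eq_epowr)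
  have "zp_integral p s f \<le> zp_integral p s (r m) + ennreal K * lp_sum p lam" for m
  proof -
    have "zp_integral p s f = zp_integral p s (\<lambda>w. r m w + (\<Sum>k<m. lam k *s a k w))"
      by (simp add: r_def)
    also have "\<dots> \<le> zp_integral p s (r m) + zp_integral p s (\<lambda>w. \<Sum>k<m. lam k *s a k w)"
      using p unfolding r_def by (intro zp_integral_add_le) measurable
    also have "zp_integral p s (\<lambda>w. \<Sum>k<m. lam k *s a k w) \<le> (\<Sum>k<m. zp_integral p s (\<lambda>w. lam k *s a k w))"
      using p by (intro zp_integral_sum_le) measurable
    also have "\<dots> = (\<Sum>k<m. ennreal (norm (lam k) powr p) * zp_integral p s (a k))"
      using p by (intro sum.cong refl zp_integral_scale) measurable
    also have "\<dots> \<le> (\<Sum>k<m. ennreal (norm (lam k) powr p) * ennreal K)"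
      using atom_le by (intro sum_mono mult_left_mono) auto
    also have "\<dots> = ennreal K * (\<Sum>k<m. ennreal (norm (lam k) powr p))"
      by (simp only: sum_distrib_left mult.commute)
    also have "\<dots> \<le> ennreal K * lp_sum p lam"
      unfolding lp_sum_def by (intro mult_left_mono sum_le_suminf) auto
    finally show ?thesis by (simp add: add_left_mono)
  qed
  moreover have "(\<lambda>m. zp_integral p s (r m) + ennreal K * lp_sum p lam) \<longlonglongrightarrow> 0 + ennreal K * lp_sum p lam"
    by (intro tendsto_add r_tendsto tendsto_const)
  ultimately have "zp_integral p s f \<le> 0 + ennreal K * lp_sum p lam"
    by (intro LIMSEQ_le_const) auto
  then show ?thesis by (simp add: K_def)
qed

lemma zp_norm_le_atomic_decomp:
  fixes f :: "real \<times> (real^'n::finite) \<Rightarrow> complex^'N::finite"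
  assumes "whitney_param c" "0 < p" "p \<le> 1" "f \<in> borel_measurable lborel"
    and "atomic_decomp p s c f lam a"
  shows "zp_norm p s f \<le> ennreal (atom_constant p c CARD('n) powr (1/p)) * lp_norm p lam"
proof -
  have "zp_norm p s f \<le> epowr (ennreal (atom_constant p c CARD('n)) * lp_sum p lam) (1/p)"
    unfolding zp_norm_eq_epowr using assms by (intro epowr_mono zp_integral_le_atomic_decomp) auto
  also have "\<dots> = ennreal (atom_constant p c CARD('n) powr (1/p)) * lp_norm p lam"
    using assms atom_constant_pos[THEN less_imp_le] by (simp add: epowr_mult epowr_ennreal lp_norm_def)
  finally show ?thesis .
qed

section \<open>Dyadic Whitney cubes\<close>

definition dyadic_height :: "int \<Rightarrow> real" where "dyadic_height j = 2 powr (real_of_int j)"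

lemma dyadic_height_pos[simp]: "dyadic_height j > 0"
  by (simp add: dyadic_height_def)

text \<open>The dyadic cube with index \<open>(j, v)\<close> is \<open>[2\<^sup>j, 2\<^sup>j\<^sup>+\<^sup>1) \<times> \<Prod>\<^sub>i [v\<^sub>i h 2\<^sup>j, (v\<^sub>i + 1) h 2\<^sup>j)\<close>.\<close>

definition dyadic_index :: "real \<Rightarrow> real \<times> (real^'n::finite) \<Rightarrow> int \<times> ('n \<Rightarrow> int)" where
  "dyadic_index h w =
     (\<lfloor>log 2 (fst w)\<rfloor>, \<lambda>i. \<lfloor>snd w $ i / (h * dyadic_height \<lfloor>log 2 (fst w)\<rfloor>)\<rfloor>)"

definition dyadic_cube :: "real \<Rightarrow> int \<times> ('n::finite \<Rightarrow> int) \<Rightarrow> (real \<times> (real^'n)) set" where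
  "dyadic_cube h q = {w. fst w > 0 \<and> dyadic_index h w = q}"

definition dyadic_centre :: "real \<Rightarrow> int \<times> ('n::finite \<Rightarrow> int) \<Rightarrow> real \<times> (real^'n)" where
  "dyadic_centre h q =
     (4/3 * dyadic_height (fst q), \<chi> i. (of_int (snd q i) + 1/2) * (h * dyadic_height (fst q)))"

lemma floor_log_eq_iff:
  assumes "t > 0"
  shows "\<lfloor>log 2 t\<rfloor> = j \<longleftrightarrow> dyadic_height j \<le> t \<and> t < 2 * dyadic_height j"
proof -
  have "\<lfloor>log 2 t\<rfloor> = j \<longleftrightarrow> real_of_int j \<le> log 2 t \<and> log 2 t < real_of_int j + 1"
    by (simp add: floor_eq_iff)
  also have "\<dots> \<longleftrightarrow> dyadic_height j \<le> t \<and> t < 2 * dyadic_height j"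
    using assms by (simp add: le_log_iff log_less_iff dyadic_height_def powr_add mult.commute)
  finally show ?thesis .
qed

lemma floor_divide_eq_iff:
  "L > 0 \<Longrightarrow> \<lfloor>x / L\<rfloor> = k \<longleftrightarrow> of_int k * L \<le> x \<and> x < (of_int k + 1) * L"
  by (simp add: floor_eq_iff le_divide_eq divide_less_eq)

lemma mem_dyadic_cube_iff:
  assumes h: "h > 0"
  shows "w \<in> dyadic_cube h (j, v) \<longleftrightarrow> dyadic_height j \<le> fst w \<and> fst w < 2 * dyadic_height j \<and>
     (\<forall>i. of_int (v i) * (h * dyadic_height j) \<le> snd w $ i \<and> snd w $ i < (of_int (v i) + 1) * (h * dyadic_height j))"
    (is "_ \<longleftrightarrow> ?box")
proof
  assume w: "w \<in> dyadic_cube h (j, v)"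
  then have t: "fst w > 0" and "\<lfloor>log 2 (fst w)\<rfloor> = j"
    and "\<And>i. \<lfloor>snd w $ i / (h * dyadic_height j)\<rfloor> = v i"
    by (auto simp: dyadic_cube_def dyadic_index_def)
  then show ?box
    using floor_log_eq_iff[OF t] floor_divide_eq_iff[of "h * dyadic_height j"] h by auto
next
  assume box: ?box
  then have t: "fst w > 0" using dyadic_height_pos[of j] by linarith
  have "\<lfloor>log 2 (fst w)\<rfloor> = j" using floor_log_eq_iff[OF t] box by auto
  moreover have "\<lfloor>snd w $ i / (h * dyadic_height j)\<rfloor> = v i" for i
    using floor_divide_eq_iff[of "h * dyadic_height j"] box h by auto
  ultimately show "w \<in> dyadic_cube h (j, v)" using t by (auto simp: dyadic_cube_def dyadic_index_def)
qed

lemma measurable_component_snd[measurable]: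
  "(\<lambda>w::real \<times> (real^'n::finite). snd w $ i) \<in> borel_measurable lborel"
proof -
  have "continuous_on UNIV (\<lambda>w::real \<times> (real^'n::finite). snd w $ i)"
    by (intro continuous_intros)
  then show ?thesis by (simp add: borel_measurable_continuous_onI)
qed

lemma sets_dyadic_cube[measurable]:
  assumes "h > 0"
  shows "dyadic_cube h q \<in> sets lborel"
proof -
  obtain j v where q: "q = (j, v)" by (cases q)
  have "dyadic_cube h q = {w \<in> space lborel. dyadic_height j \<le> fst w \<and> fst w < 2 * dyadic_height j \<and>
     (\<forall>i. of_int (v i) * (h * dyadic_height j) \<le> snd w $ i \<and> snd w $ i < (of_int (v i) + 1) * (h * dyadic_height j))}"
    using mem_dyadic_cube_iff[OF assms] unfolding q by auto
  also have "\<dots> \<in> sets lborel" by measurable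
  finally show ?thesis .
qed

lemma dyadic_cubes_disjoint: "q \<noteq> q' \<Longrightarrow> dyadic_cube h q \<inter> dyadic_cube h q' = {}"
  by (auto simp: dyadic_cube_def)

lemma mem_dyadic_cube_index: "fst w > 0 \<Longrightarrow> w \<in> dyadic_cube h (dyadic_index h w)"
  by (simp add: dyadic_cube_def)

lemma dyadic_cube_fst_pos: "w \<in> dyadic_cube h q \<Longrightarrow> fst w > 0"
  by (simp add: dyadic_cube_def)

lemma dist_le_card_mult_cart:
  fixes x y :: "real^'n::finite"
  assumes "\<And>i. \<bar>x$i - y$i\<bar> \<le> L"
  shows "dist x y \<le> real CARD('n) * L"
proof -
  have "dist x y \<le> (\<Sum>i\<in>UNIV. \<bar>(x - y)$i\<bar>)" unfolding dist_norm by (rule norm_le_l1_cart)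
  also have "\<dots> \<le> (\<Sum>i\<in>(UNIV::'n set). L)" using assms by (intro sum_mono) auto
  finally show ?thesis by simp
qed

lemma dist_less_card_mult_cart:
  fixes x y :: "real^'n::finite"
  assumes "\<And>i. \<bar>x$i - y$i\<bar> < L"
  shows "dist x y < real CARD('n) * L"
proof -
  have "dist x y \<le> (\<Sum>i\<in>UNIV. \<bar>(x - y)$i\<bar>)" unfolding dist_norm by (rule norm_le_l1_cart)
  also have "\<dots> < (\<Sum>i\<in>(UNIV::'n set). L)" using assms by (intro sum_strict_mono) auto
  finally show ?thesis by simp
qed

lemma dyadic_cube_subset_whitney_region:
  fixes q :: "int \<times> ('n::finite \<Rightarrow> int)"
  assumes wp: "whitney_param c" and h: "h > 0" "h * real CARD('n) < fst c"
  shows "dyadic_cube h q \<subseteq> whitney_region c (dyadic_centre h q)"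
proof
  fix w assume w: "w \<in> dyadic_cube h q"
  obtain j v where q: "q = (j, v)" by (cases q)
  define P where "P = dyadic_height j"
  define L where "L = h * P"
  have P: "P > 0" by (simp add: P_def)
  have H: "P \<le> fst w" "fst w < 2 * P"
    "\<And>i. of_int (v i) * L \<le> snd w $ i" "\<And>i. snd w $ i < (of_int (v i) + 1) * L"
    using w mem_dyadic_cube_iff[OF h(1), of w j v] unfolding q P_def L_def by auto
  have c: "fst c > 0" "snd c > 3/2" using wp by (auto simp: whitney_param_def)
  have "4/3 * P / snd c < P" using P c by (simp add: divide_less_eq)
  then have 1: "4/3 * P / snd c < fst w" using H by linarith
  have "2 * P \<le> snd c * (4/3 * P)" using P c by (simp add: mult_right_mono)
  then have 2: "fst w < snd c * (4/3 * P)" using H by linarith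
  have "dist (\<chi> i. (of_int (v i) + 1/2) * L) (snd w) \<le> real CARD('n) * (L/2)"
  proof (rule dist_le_card_mult_cart)
    fix i
    have "(\<chi> i. (of_int (v i) + 1/2) * L) $ i = of_int (v i) * L + L/2" by (simp add: distrib_right)
    then show "\<bar>(\<chi> i. (of_int (v i) + 1/2) * L) $ i - snd w $ i\<bar> \<le> L/2"
      unfolding abs_le_iff using H(3,4)[of i] by (simp add: distrib_right)
  qed
  also have "\<dots> = (h * real CARD('n)) * P / 2" by (simp add: L_def)
  also have "\<dots> < fst c * (4/3 * P)" using h P c by (simp add: divide_strict_right_mono)
  finally show "w \<in> whitney_region c (dyadic_centre h q)"
    using 1 2 unfolding whitney_region_def dyadic_centre_def q P_def L_def by simp
qed

lemma dyadic_cube_subset_whitney_region_of_mem: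
  fixes q :: "int \<times> ('n::finite \<Rightarrow> int)"
  assumes h: "h > 0" "h * real CARD('n) < 1" and z: "z \<in> dyadic_cube h q"
  shows "dyadic_cube h q \<subseteq> whitney_region (1,2) z"
proof
  fix w assume w: "w \<in> dyadic_cube h q"
  obtain j v where q: "q = (j, v)" by (cases q)
  define P where "P = dyadic_height j"
  define L where "L = h * P"
  have P: "P > 0" by (simp add: P_def)
  have H: "P \<le> fst w" "fst w < 2 * P"
    "\<And>i. of_int (v i) * L \<le> snd w $ i" "\<And>i. snd w $ i < (of_int (v i) + 1) * L"
    using w mem_dyadic_cube_iff[OF h(1), of w j v] unfolding q P_def L_def by auto
  have Z: "P \<le> fst z" "fst z < 2 * P"
    "\<And>i. of_int (v i) * L \<le> snd z $ i" "\<And>i. snd z $ i < (of_int (v i) + 1) * L"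
    using z mem_dyadic_cube_iff[OF h(1), of z j v] unfolding q P_def L_def by auto
  have "dist (snd z) (snd w) < real CARD('n) * L"
  proof (rule dist_less_card_mult_cart)
    fix i show "\<bar>snd z $ i - snd w $ i\<bar> < L"
      using H(3,4)[of i] Z(3,4)[of i] by (simp add: algebra_simps abs_less_iff)
  qed
  also have "\<dots> = (h * real CARD('n)) * P" by (simp add: L_def)
  also have "\<dots> \<le> 1 * P" using h P by (intro mult_right_mono) auto
  also have "\<dots> \<le> fst z" using Z by simp
  finally show "w \<in> whitney_region (1,2) z"
    using H Z unfolding whitney_region_def by auto
qed

lemma nn_integral_dyadic_cube_inverse_ge:
  fixes j :: int and v :: "'n::finite \<Rightarrow> int"
  assumes h: "h > 0"
  shows "ennreal (unit_ball_vol CARD('n) * (h/2) ^ CARD('n) * dyadic_height j ^ CARD('n) / 2)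
     \<le> (\<integral>\<^sup>+ z \<in> dyadic_cube h (j, v). ennreal (1 / fst z) \<partial>lborel)"
proof -
  define P where "P = dyadic_height j"
  define L where "L = h * P"
  have P: "P > 0" by (simp add: P_def)
  define x where "x = ((\<chi> i. (of_int (v i) + 1/2) * L) :: real^'n)"
  define B where "B = {P<..<2*P} \<times> ball x (L/2)"
  have B_subset: "B \<subseteq> dyadic_cube h (j, v)"
  proof
    fix w assume "w \<in> B"
    then have w: "P < fst w" "fst w < 2 * P" "dist x (snd w) < L/2" by (auto simp: B_def)
    have "\<bar>x $ i - snd w $ i\<bar> < L/2" for i
      using component_le_norm_cart[of "x - snd w" i] w(3) by (simp add: dist_norm)
    moreover have "x $ i = of_int (v i) * L + L/2" for i by (simp add: x_def distrib_right)
    ultimately have "of_int (v i) * L \<le> snd w $ i \<and> snd w $ i < (of_int (v i) + 1) * L" for i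
      unfolding abs_less_iff by (simp add: distrib_right) (smt (verit))
    then show "w \<in> dyadic_cube h (j, v)"
      using mem_dyadic_cube_iff[OF h, of w j v] w unfolding P_def L_def by auto
  qed
  have "ennreal (1 / (2*P)) * indicator B z \<le> ennreal (1 / fst z) * indicator (dyadic_cube h (j, v)) z" for z
  proof (cases "z \<in> B")
    case True
    then have "1 / (2*P) \<le> 1 / fst z" using P by (intro divide_left_mono) (auto simp: B_def)
    moreover have "z \<in> dyadic_cube h (j, v)" using True B_subset by auto
    ultimately show ?thesis using True by (auto intro: ennreal_leI)
  qed simp
  then have "(\<integral>\<^sup>+ z. ennreal (1 / (2*P)) * indicator B z \<partial>lborel)
      \<le> (\<integral>\<^sup>+ z \<in> dyadic_cube h (j, v). ennreal (1 / fst z) \<partial>lborel)"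
    by (intro nn_integral_mono)
  moreover have "(\<integral>\<^sup>+ z. ennreal (1 / (2*P)) * indicator B z \<partial>lborel) = ennreal (1 / (2*P)) * emeasure lborel B"
    by (rule nn_integral_cmult_indicator) (simp add: B_def borel_open open_Times)
  moreover have "emeasure lborel B = ennreal (P * (unit_ball_vol CARD('n) * (L/2) ^ CARD('n)))"
    unfolding B_def using P h by (subst emeasure_interval_Times_ball) (auto simp: L_def)
  moreover have "ennreal (1 / (2*P)) * ennreal (P * (unit_ball_vol CARD('n) * (L/2) ^ CARD('n)))
      = ennreal (unit_ball_vol CARD('n) * (h/2) ^ CARD('n) * dyadic_height j ^ CARD('n) / 2)"
  proof -
    have "ennreal (1 / (2*P)) * ennreal (P * (unit_ball_vol CARD('n) * (L/2) ^ CARD('n)))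
        = ennreal (1 / (2*P) * (P * (unit_ball_vol CARD('n) * (L/2) ^ CARD('n))))"
      using P h by (intro ennreal_mult[symmetric]) (auto simp: L_def)
    also have "1 / (2*P) * (P * (unit_ball_vol CARD('n) * (L/2) ^ CARD('n)))
        = unit_ball_vol CARD('n) * (h/2) ^ CARD('n) * dyadic_height j ^ CARD('n) / 2"
      using P by (simp add: L_def P_def power_mult_distrib field_simps)
    finally show ?thesis .
  qed
  ultimately show ?thesis by simp
qed

section \<open>Decomposition of a \<open>Z\<^sup>p\<close> function into atoms\<close>

lemma cube_bound_scale_invariant:
  fixes P p \<omega> :: real and n :: nat
  assumes P: "P > 0" and p: "p > 0" and \<omega>: "\<omega> > 0"
  shows "(3 * \<omega> * (2*P)^n) powr (p/2) * (4/3 * P) powr (-(real n * (1/2 - 1/p)) * p)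
    = (3 * \<omega> * 2^n) powr (p/2) * (4/3) powr (-(real n * (1/2 - 1/p)) * p) * P ^ n"
proof -
  have "(3 * \<omega> * (2*P)^n) powr (p/2) = (3 * \<omega> * 2^n) powr (p/2) * P powr (real n * (p/2))"
    using P \<omega> by (simp add: power_mult_distrib powr_mult powr_realpow[symmetric] powr_powr mult.assoc)
  moreover have "(4/3 * P) powr (-(real n * (1/2 - 1/p)) * p)
      = (4/3) powr (-(real n * (1/2 - 1/p)) * p) * P powr (-(real n * (1/2 - 1/p)) * p)"
    using P powr_mult[of "4/3" P] by simp
  moreover have "real n * (p/2) + (-(real n * (1/2 - 1/p)) * p) = real n"
    using p by (simp add: field_simps)
  then have "P powr (real n * (p/2)) * P powr (-(real n * (1/2 - 1/p)) * p) = P ^ n"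
    using P by (simp add: powr_add[symmetric] powr_realpow)
  ultimately show ?thesis by (simp add: ac_simps)
qed

definition cube_constant :: "real \<Rightarrow> real \<Rightarrow> nat \<Rightarrow> real" where
  "cube_constant p h n = (3 * unit_ball_vol n * 2^n) powr (p/2) * (4/3) powr (-(real n * (1/2 - 1/p)) * p)
        / (unit_ball_vol n * (h/2) ^ n / 2)"

lemma cube_constant_pos:
  assumes "h > 0"
  shows "cube_constant p h n > 0"
proof -
  have "unit_ball_vol (real n) > 0" by simp
  then have "unit_ball_vol (real n) \<noteq> 0" by linarith
  with assms show ?thesis
    unfolding cube_constant_def by (auto intro!: divide_pos_pos mult_pos_pos)
qed

text \<open>The atoms decomposing \<open>f\<close> are its normalised restrictions to the dyadic cubes, enumerated by
  \<open>cube\<close>; the side ratio \<open>h\<close> is so small that each cube lies in the Whitney region of each of its points.\<close>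

locale whitney_cube_decomposition =
  fixes f :: "real \<times> (real^'n::finite) \<Rightarrow> complex^'N::finite"
    and s p h :: real
  assumes f_measurable[measurable]: "f \<in> borel_measurable lborel"
    and p: "0 < p" "p \<le> 1" and h: "h > 0" "h * real CARD('n) < 1"
begin

lemma sets_dyadic_cube_h[measurable]: "dyadic_cube h q \<in> sets lborel"
  using sets_dyadic_cube[OF h(1)] .

abbreviation W :: "real \<times> (real^'n) \<Rightarrow> ennreal" where
  "W \<equiv> whitney_avg (1,2) (kappa (-s) f)"

definition cube_energy :: "int \<times> ('n \<Rightarrow> int) \<Rightarrow> ennreal" where
  "cube_energy q = (\<integral>\<^sup>+ w \<in> dyadic_cube h q. ennreal ((norm (kappa (-s) f w))\<^sup>2) * ennreal (1 / fst w) \<partial>lborel)"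

text \<open>The coefficient of a cube \<open>Q\<close> is the \<open>L\<^sup>2(Q, dx dt/t)\<close> norm of \<open>f\<close> times \<open>t\<^sub>Q\<^sup>-\<^sup>n\<^sup>\<delta>\<close>, where
  \<open>t\<^sub>Q\<close> is the height of the centre of \<open>Q\<close>: exactly the normalisation making \<open>f|\<^sub>Q\<close> divided by it an atom.\<close>

definition cube_coeff :: "int \<times> ('n \<Rightarrow> int) \<Rightarrow> ennreal" where
  "cube_coeff q = epowr (cube_energy q) (1/2) * ennreal (fst (dyadic_centre h q) powr (-(real CARD('n) * (1/2 - 1/p))))"

definition cube_zp_integral :: "int \<times> ('n \<Rightarrow> int) \<Rightarrow> ennreal" where
  "cube_zp_integral q = (\<integral>\<^sup>+ z \<in> dyadic_cube h q. epowr (W z) p * ennreal (1 / fst z) \<partial>lborel)"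

lemma cube_energy_le:
  assumes z: "z \<in> dyadic_cube h (j, v)"
  shows "cube_energy (j, v) \<le> ennreal (3 * unit_ball_vol CARD('n) * (2 * dyadic_height j)^CARD('n)) * epowr (W z) 2"
proof -
  define P where "P = dyadic_height j"
  define \<omega> where "\<omega> = unit_ball_vol CARD('n)"
  define N where "N = (\<integral>\<^sup>+ w \<in> whitney_region (1,2) z. ennreal ((norm (kappa (-s) f w))\<^sup>2) \<partial>lborel)"
  define d where "d = (3/2) * \<omega> * fst z ^ (CARD('n) + 1)"
  have \<omega>: "\<omega> > 0" and P: "P > 0" by (simp_all add: \<omega>_def P_def)
  have Z: "P \<le> fst z" "fst z < 2 * P"
    using z mem_dyadic_cube_iff[OF h(1), of z j v] by (auto simp: P_def)
  have D: "emeasure lborel (whitney_region (1,2) z) = ennreal d"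
    unfolding d_def \<omega>_def using emeasure_whitney_region[of "(1::real,2::real)" z] Z P by simp
  have d_pos: "d > 0" using Z P \<omega> by (simp add: d_def)
  have d_le: "d \<le> P * (3 * \<omega> * (2 * P)^CARD('n))"
  proof -
    have "d \<le> (3/2) * \<omega> * (2 * P) ^ (CARD('n) + 1)"
      unfolding d_def using Z P \<omega> by (intro mult_left_mono power_mono) auto
    then show ?thesis by (simp add: ac_simps)
  qed
  have "cube_energy (j, v) \<le> (\<integral>\<^sup>+ w. ennreal (1 / P) * (ennreal ((norm (kappa (-s) f w))\<^sup>2) * indicator (whitney_region (1,2) z) w) \<partial>lborel)"
    unfolding cube_energy_def
  proof (intro nn_integral_mono)
    fix w
    show "ennreal ((norm (kappa (-s) f w))\<^sup>2) * ennreal (1 / fst w) * indicator (dyadic_cube h (j, v)) w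
      \<le> ennreal (1 / P) * (ennreal ((norm (kappa (-s) f w))\<^sup>2) * indicator (whitney_region (1,2) z) w)"
    proof (cases "w \<in> dyadic_cube h (j, v)")
      case True
      then have "P \<le> fst w" using mem_dyadic_cube_iff[OF h(1), of w j v] by (auto simp: P_def)
      then have "1 / fst w \<le> 1 / P" using P by (intro divide_left_mono) auto
      moreover have "w \<in> whitney_region (1,2) z"
        using dyadic_cube_subset_whitney_region_of_mem[OF h z] True by auto
      ultimately show ?thesis using True by (auto simp: ac_simps intro!: mult_right_mono ennreal_leI)
    qed simp
  qed
  also have "\<dots> = ennreal (1 / P) * ((N / ennreal d) * ennreal d)"
    unfolding N_def using d_pos by (subst nn_integral_cmult) (simp_all add: ennreal_divide_times)
  also have "\<dots> \<le> ennreal (1 / P) * ((N / ennreal d) * ennreal (P * (3 * \<omega> * (2 * P)^CARD('n))))"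
    using d_le by (intro mult_left_mono ennreal_leI) auto
  also have "N / ennreal d = epowr (W z) 2"
    unfolding whitney_avg_def D[symmetric] N_def by (simp add: epowr_epowr)
  also have "ennreal (1 / P) * (epowr (W z) 2 * ennreal (P * (3 * \<omega> * (2 * P)^CARD('n))))
      = (ennreal (1 / P) * ennreal (P * (3 * \<omega> * (2 * P)^CARD('n)))) * epowr (W z) 2"
    by (simp only: ac_simps)
  also have "ennreal (1 / P) * ennreal (P * (3 * \<omega> * (2 * P)^CARD('n))) = ennreal (3 * \<omega> * (2 * P)^CARD('n))"
    using P \<omega> by (simp add: ennreal_mult[symmetric])
  finally show ?thesis
    by (simp add: \<omega>_def P_def)
qed

lemma cube_coeff_le_whitney_avg:
  assumes z: "z \<in> dyadic_cube h (j, v)"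
  defines "g \<equiv> (3 * unit_ball_vol CARD('n) * 2^CARD('n)) powr (p/2) * (4/3) powr (-(real CARD('n) * (1/2 - 1/p)) * p)"
  shows "epowr (cube_coeff (j, v)) p \<le> ennreal (g * dyadic_height j ^ CARD('n)) * epowr (W z) p"
proof -
  define P where "P = dyadic_height j"
  define n where "n = CARD('n)"
  define \<omega> where "\<omega> = unit_ball_vol n"
  define e where "e = real n * (1/2 - 1/p)"
  have P: "P > 0" and \<omega>: "\<omega> > 0" by (simp_all add: P_def \<omega>_def)
  have "epowr (cube_coeff (j, v)) p = epowr (cube_energy (j, v)) (p/2) * ennreal ((4/3 * P) powr (-e * p))"
    unfolding cube_coeff_def using p P
    by (simp add: epowr_mult epowr_epowr epowr_ennreal powr_powr dyadic_centre_def P_def e_def n_def)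
  also have "epowr (cube_energy (j, v)) (p/2) \<le> epowr (ennreal (3 * \<omega> * (2 * P)^n) * epowr (W z) 2) (p/2)"
    using cube_energy_le[OF z] p by (intro epowr_mono) (auto simp: \<omega>_def P_def n_def)
  also have "\<dots> = ennreal ((3 * \<omega> * (2 * P)^n) powr (p/2)) * epowr (W z) p"
    using p \<omega> P by (simp add: epowr_mult epowr_ennreal epowr_epowr)
  finally have "epowr (cube_coeff (j, v)) p
      \<le> ennreal ((3 * \<omega> * (2 * P)^n) powr (p/2) * (4/3 * P) powr (-e * p)) * epowr (W z) p"
    by (simp add: ennreal_mult mult_right_mono ac_simps)
  also have "(3 * \<omega> * (2 * P)^n) powr (p/2) * (4/3 * P) powr (-e * p) = g * P ^ n"
    using cube_bound_scale_invariant[OF P p(1) \<omega>, of n] by (simp add: g_def e_def \<omega>_def n_def)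
  finally show ?thesis by (simp add: P_def n_def)
qed

lemma cube_coeff_le:
  "epowr (cube_coeff (j, v)) p \<le> ennreal (cube_constant p h CARD('n)) * cube_zp_integral (j, v)"
proof -
  define Q where "Q = dyadic_cube h (j, v)"
  define P where "P = dyadic_height j"
  define n where "n = CARD('n)"
  define g where "g = (3 * unit_ball_vol n * 2^n) powr (p/2) * (4/3) powr (-(real n * (1/2 - 1/p)) * p)"
  define \<alpha> where "\<alpha> = unit_ball_vol n * (h/2) ^ n / 2"
  define M where "M = (\<integral>\<^sup>+ z \<in> Q. ennreal (1 / fst z) \<partial>lborel)"
  have P: "P > 0" by (simp add: P_def)
  have g: "g \<ge> 0" by (simp add: g_def)
  have \<alpha>: "\<alpha> > 0" using h by (simp add: \<alpha>_def)
  have M: "ennreal (\<alpha> * P^n) \<le> M"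
    unfolding M_def \<alpha>_def n_def P_def Q_def using nn_integral_dyadic_cube_inverse_ge[OF h(1), of j v]
    by (simp add: mult_ac)
  have "epowr (cube_coeff (j, v)) p * M = (\<integral>\<^sup>+ z. epowr (cube_coeff (j, v)) p * (ennreal (1 / fst z) * indicator Q z) \<partial>lborel)"
    unfolding M_def Q_def by (rule nn_integral_cmult[symmetric]) measurable
  also have "\<dots> \<le> (\<integral>\<^sup>+ z. ennreal (g * P^n) * (epowr (W z) p * ennreal (1 / fst z) * indicator Q z) \<partial>lborel)"
  proof (intro nn_integral_mono)
    fix z
    show "epowr (cube_coeff (j, v)) p * (ennreal (1 / fst z) * indicator Q z)
        \<le> ennreal (g * P^n) * (epowr (W z) p * ennreal (1 / fst z) * indicator Q z)"
    proof (cases "z \<in> Q")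
      case True
      then show ?thesis
        using cube_coeff_le_whitney_avg[of z j v]
        by (simp add: Q_def g_def P_def n_def mult_right_mono mult.assoc[symmetric])
    qed simp
  qed
  also have "\<dots> = ennreal (g * P^n) * cube_zp_integral (j, v)"
    unfolding cube_zp_integral_def Q_def by (rule nn_integral_cmult) measurable
  finally have integrated: "epowr (cube_coeff (j, v)) p * M \<le> ennreal (g * P^n) * cube_zp_integral (j, v)" .
  have inverse: "ennreal (\<alpha> * P^n) * ennreal (1 / (\<alpha> * P^n)) = 1"
    using \<alpha> P by (simp add: ennreal_mult[symmetric])
  have "epowr (cube_coeff (j, v)) p = (epowr (cube_coeff (j, v)) p * ennreal (\<alpha> * P^n)) * ennreal (1 / (\<alpha> * P^n))"
    by (simp only: mult.assoc inverse mult_1_right)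
  also have "\<dots> \<le> (ennreal (g * P^n) * cube_zp_integral (j, v)) * ennreal (1 / (\<alpha> * P^n))"
  proof (rule mult_right_mono)
    have "epowr (cube_coeff (j, v)) p * ennreal (\<alpha> * P^n) \<le> epowr (cube_coeff (j, v)) p * M"
      using M by (rule mult_left_mono) simp
    then show "epowr (cube_coeff (j, v)) p * ennreal (\<alpha> * P^n) \<le> ennreal (g * P^n) * cube_zp_integral (j, v)"
      using integrated by (rule order_trans)
  qed simp
  also have "\<dots> = ennreal (g * P^n * (1 / (\<alpha> * P^n))) * cube_zp_integral (j, v)"
    using g \<alpha> P by (subst ennreal_mult) (auto simp: ac_simps)
  also have "g * P^n * (1 / (\<alpha> * P^n)) = cube_constant p h CARD('n)"
    unfolding cube_constant_def g_def \<alpha>_def n_def using P by simp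
  finally show ?thesis .
qed

definition cube :: "nat \<Rightarrow> int \<times> ('n \<Rightarrow> int)" where
  "cube = from_nat_into UNIV"

definition cube_number :: "int \<times> ('n \<Rightarrow> int) \<Rightarrow> nat" where
  "cube_number = to_nat_on UNIV"

lemma cube_cube_number[simp]: "cube (cube_number q) = q"
  by (simp add: cube_def cube_number_def)

lemma cube_eq_iff[simp]: "cube k = cube l \<longleftrightarrow> k = l"
  unfolding cube_def by (rule from_nat_into_inj_infinite) (auto simp: infinite_UNIV_int finite_prod)

lemma disjoint_family_cubes: "disjoint_family (\<lambda>k. dyadic_cube h (cube k))"
  unfolding disjoint_family_on_def by (simp add: dyadic_cubes_disjoint)

lemma mem_cube_number_index: "fst w > 0 \<Longrightarrow> w \<in> dyadic_cube h (cube (cube_number (dyadic_index h w)))"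
  by (simp add: mem_dyadic_cube_index)

lemma zp_integral_eq_suminf_cubes: "zp_integral p s f = (\<Sum>k. cube_zp_integral (cube k))"
proof -
  have "indicator {z. fst z > 0} z = (\<Sum>k. indicator (dyadic_cube h (cube k)) z :: ennreal)" for z :: "real \<times> (real^'n)"
  proof -
    have "(\<Union>k. dyadic_cube h (cube k)) = {z. fst z > 0}"
      using mem_cube_number_index dyadic_cube_fst_pos by blast
    then show ?thesis using suminf_indicator[OF disjoint_family_cubes, of z] by simp
  qed
  then have "zp_integral p s f
      = (\<integral>\<^sup>+ z. (\<Sum>k. epowr (W z) p * ennreal (1 / fst z) * indicator (dyadic_cube h (cube k)) z) \<partial>lborel)"
    unfolding zp_integral_def by (simp add: ennreal_suminf_cmult)
  also have "\<dots> = (\<Sum>k. cube_zp_integral (cube k))"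
    unfolding cube_zp_integral_def by (rule nn_integral_suminf) measurable
  finally show ?thesis .
qed

lemma cube_zp_integral_le: "cube_zp_integral q \<le> zp_integral p s f"
  unfolding zp_integral_eq_suminf_cubes
  using sum_le_suminf[of "\<lambda>k. cube_zp_integral (cube k)" "{cube_number q}"] by simp

lemma cube_coeff_less_top:
  assumes "zp_integral p s f < top"
  shows "cube_coeff q < top"
proof -
  obtain j v where q: "q = (j, v)" by (cases q)
  have "epowr (cube_coeff q) p \<le> ennreal (cube_constant p h CARD('n)) * zp_integral p s f"
    unfolding q using cube_coeff_le cube_zp_integral_le by (rule order_trans[OF _ mult_left_mono]) simp
  also have "\<dots> < top" using assms by (simp add: ennreal_mult_less_top)
  finally show ?thesis by simp
qed

definition cube_weight :: "nat \<Rightarrow> real" where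
  "cube_weight k = enn2real (cube_coeff (cube k))"

definition lam :: "nat \<Rightarrow> complex" where
  "lam k = complex_of_real (cube_weight k)"

lemma cube_weight_nonneg: "cube_weight k \<ge> 0"
  by (simp add: cube_weight_def)

lemma norm_lam: "norm (lam k) = cube_weight k"
  using cube_weight_nonneg[of k] by (simp add: lam_def)

lemma lp_sum_lam_le:
  assumes "zp_integral p s f < top"
  shows "lp_sum p lam \<le> ennreal (cube_constant p h CARD('n)) * zp_integral p s f"
proof -
  have "ennreal (norm (lam k) powr p) = epowr (cube_coeff (cube k)) p" for k
    using cube_coeff_less_top[OF assms, of "cube k"] by (simp add: norm_lam cube_weight_def epowr_def)
  also have "epowr (cube_coeff (cube k)) p \<le> ennreal (cube_constant p h CARD('n)) * cube_zp_integral (cube k)" for k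
    using cube_coeff_le by (metis prod.exhaust)
  finally have "lp_sum p lam \<le> (\<Sum>k. ennreal (cube_constant p h CARD('n)) * cube_zp_integral (cube k))"
    unfolding lp_sum_def by (intro suminf_le) auto
  then show ?thesis
    by (simp add: ennreal_suminf_cmult zp_integral_eq_suminf_cubes)
qed

definition atom :: "nat \<Rightarrow> real \<times> (real^'n) \<Rightarrow> complex^'N" where
  "atom k = (\<lambda>w. if w \<in> dyadic_cube h (cube k) \<and> cube_weight k \<noteq> 0 then complex_of_real (1 / cube_weight k) *s f w else 0)"

lemma atom_measurable[measurable]: "atom k \<in> borel_measurable lborel"
  unfolding atom_def by measurable

lemma nn_integral_atom:
  assumes "dyadic_cube h (cube k) \<subseteq> A"
  shows "(\<integral>\<^sup>+ w \<in> A. ennreal ((norm (kappa (-s) (atom k) w))\<^sup>2) * ennreal (1 / fst w) \<partial>lborel)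
    = ennreal ((1 / cube_weight k)\<^sup>2) * cube_energy (cube k)"
proof -
  have "ennreal ((norm (kappa (-s) (atom k) w))\<^sup>2) * ennreal (1 / fst w) * indicator A w
    = ennreal ((1 / cube_weight k)\<^sup>2) *
      (ennreal ((norm (kappa (-s) f w))\<^sup>2) * ennreal (1 / fst w) * indicator (dyadic_cube h (cube k)) w)" for w
  proof (cases "w \<in> dyadic_cube h (cube k) \<and> cube_weight k \<noteq> 0")
    case True
    then have "norm (kappa (-s) (atom k) w) = (1 / cube_weight k) * norm (kappa (-s) f w)"
      using cube_weight_nonneg[of k] by (simp add: atom_def kappa_def norm_vector_scalar_mult norm_divide)
    then have "(norm (kappa (-s) (atom k) w))\<^sup>2 = (1 / cube_weight k)\<^sup>2 * (norm (kappa (-s) f w))\<^sup>2"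
      by (simp only: power_mult_distrib)
    then have "ennreal ((norm (kappa (-s) (atom k) w))\<^sup>2)
        = ennreal ((1 / cube_weight k)\<^sup>2) * ennreal ((norm (kappa (-s) f w))\<^sup>2)"
      by (simp only: ennreal_mult[OF zero_le_power2 zero_le_power2])
    moreover have "w \<in> A" using True assms by auto
    ultimately show ?thesis using True by (simp add: mult.assoc)
  qed (auto simp: atom_def kappa_def)
  then show ?thesis
    unfolding cube_energy_def by (subst nn_integral_cmult[symmetric]) (simp_all, measurable)
qed

lemma atom_is_atom:
  assumes fin: "zp_integral p s f < top" and wp: "whitney_param c" and hc: "h * real CARD('n) < fst c"
  shows "Zp_atom_at p s c (dyadic_centre h (cube k)) (atom k)"
proof -
  define z where "z = dyadic_centre h (cube k)"
  define e where "e = real CARD('n) * (1/2 - 1/p)"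
  have sub: "dyadic_cube h (cube k) \<subseteq> whitney_region c z"
    unfolding z_def by (rule dyadic_cube_subset_whitney_region[OF wp h(1) hc])
  have t: "fst z > 0" by (simp add: z_def dyadic_centre_def)
  have "epowr (ennreal ((1 / cube_weight k)\<^sup>2) * cube_energy (cube k)) (1/2) \<le> ennreal (fst z powr e)"
  proof (cases "cube_weight k = 0")
    case False
    have "cube_energy (cube k) \<noteq> top"
      using cube_coeff_less_top[OF fin, of "cube k"] t
      by (auto simp: cube_coeff_def ennreal_top_mult z_def e_def)
    then obtain g where g: "cube_energy (cube k) = ennreal g" "g \<ge> 0"
      by (cases "cube_energy (cube k)") auto
    have "cube_coeff (cube k) = ennreal (sqrt g * fst z powr (-e))"
      unfolding cube_coeff_def using g by (simp add: epowr_ennreal powr_half_sqrt ennreal_mult z_def e_def)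
    then have weight: "cube_weight k = sqrt g * fst z powr (-e)"
      using g by (simp add: cube_weight_def)
    then have "sqrt g \<noteq> 0" using False by auto
    have "sqrt ((1 / cube_weight k)\<^sup>2 * g) = sqrt g / cube_weight k"
      using cube_weight_nonneg[of k] g by (simp add: real_sqrt_mult)
    also have "\<dots> = fst z powr e"
      unfolding weight using \<open>sqrt g \<noteq> 0\<close> t by (simp add: powr_minus divide_inverse)
    finally have "sqrt ((1 / cube_weight k)\<^sup>2 * g) = fst z powr e" .
    then show ?thesis
      using g by (simp add: epowr_ennreal powr_half_sqrt ennreal_mult[symmetric])
  qed simp
  moreover have "AE w in lborel. w \<notin> whitney_region c z \<longrightarrow> atom k w = 0"
    using sub by (auto simp: atom_def)
  ultimately show ?thesis
    unfolding z_def[symmetric] Zp_atom_at_def nn_integral_atom[OF sub] e_def[symmetric] using t by simp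
qed

lemma cube_energy_eq_0_if_weight_eq_0:
  assumes fin: "zp_integral p s f < top" and "cube_weight k = 0"
  shows "cube_energy (cube k) = 0"
proof -
  have "cube_coeff (cube k) = 0"
    using assms cube_coeff_less_top[OF fin, of "cube k"] by (auto simp: cube_weight_def enn2real_eq_0_iff)
  moreover have "fst (dyadic_centre h (cube k)) > 0" by (simp add: dyadic_centre_def)
  ultimately show ?thesis by (simp add: cube_coeff_def)
qed

lemma f_eq_0_on_null_cubes:
  assumes "zp_integral p s f < top"
  shows "AE w in lborel. \<forall>k. w \<in> dyadic_cube h (cube k) \<and> cube_weight k = 0 \<longrightarrow> f w = 0"
proof (subst AE_all_countable, intro allI)
  fix k
  show "AE w in lborel. w \<in> dyadic_cube h (cube k) \<and> cube_weight k = 0 \<longrightarrow> f w = 0"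
  proof (cases "cube_weight k = 0")
    case True
    then have "AE w in lborel. ennreal ((norm (kappa (-s) f w))\<^sup>2) * ennreal (1 / fst w) * indicator (dyadic_cube h (cube k)) w = 0"
      using cube_energy_eq_0_if_weight_eq_0[OF assms]
      unfolding cube_energy_def by (subst nn_integral_0_iff_AE[symmetric]) simp_all
    then show ?thesis
      by eventually_elim (auto simp: kappa_def dest: dyadic_cube_fst_pos)
  qed simp
qed

lemma lam_scale_atom: "lam k *s atom k w = (if w \<in> dyadic_cube h (cube k) \<and> cube_weight k \<noteq> 0 then f w else 0)"
proof -
  have "cube_weight k \<noteq> 0 \<Longrightarrow> lam k * complex_of_real (1 / cube_weight k) = 1"
    by (simp add: lam_def of_real_mult[symmetric])
  then show ?thesis by (auto simp: atom_def vector_smult_assoc)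
qed

lemma partial_sum_atoms:
  "(\<Sum>k<m. lam k *s atom k w) = (if \<exists>k<m. w \<in> dyadic_cube h (cube k) \<and> cube_weight k \<noteq> 0 then f w else 0)"
proof (cases "\<exists>k<m. w \<in> dyadic_cube h (cube k) \<and> cube_weight k \<noteq> 0")
  case True
  then obtain l where l: "l < m" "w \<in> dyadic_cube h (cube l)" "cube_weight l \<noteq> 0" by auto
  have "w \<notin> dyadic_cube h (cube k)" if "k \<noteq> l" for k
    using disjoint_family_cubes l(2) that unfolding disjoint_family_on_def by blast
  then have "(\<Sum>k<m. lam k *s atom k w) = lam l *s atom l w + (\<Sum>k\<in>{..<m} - {l}. lam k *s atom k w)"
    using l(1) by (subst sum.remove[of _ l]) auto
  also have "(\<Sum>k\<in>{..<m} - {l}. lam k *s atom k w) = 0"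
    using \<open>\<And>k. k \<noteq> l \<Longrightarrow> w \<notin> dyadic_cube h (cube k)\<close> by (intro sum.neutral) (auto simp: lam_scale_atom)
  finally have "(\<Sum>k<m. lam k *s atom k w) = lam l *s atom l w" by simp
  then show ?thesis using True l by (simp add: lam_scale_atom)
qed (auto simp: lam_scale_atom intro!: sum.neutral)

definition tail :: "nat \<Rightarrow> real \<times> (real^'n) \<Rightarrow> complex^'N" where
  "tail m = (\<lambda>w. if w \<in> (\<Union>k<m. dyadic_cube h (cube k)) then 0 else f w)"

lemma tail_measurable[measurable]: "tail m \<in> borel_measurable lborel"
  unfolding tail_def by measurable

lemma remainder_eq_tail_AE:
  assumes "zp_integral p s f < top"
  shows "AE w in lborel. f w - (\<Sum>k<m. lam k *s atom k w) = tail m w"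
  using f_eq_0_on_null_cubes[OF assms]
  by eventually_elim (auto simp: partial_sum_atoms tail_def)

lemma zp_integral_remainder_eq:
  assumes "zp_integral p s f < top"
  shows "zp_integral p s (\<lambda>w. f w - (\<Sum>k<m. lam k *s atom k w)) = zp_integral p s (tail m)"
  by (rule zp_integral_cong_AE) (use remainder_eq_tail_AE[OF assms, of m] in \<open>auto elim!: eventually_mono\<close>)

lemma tail_0: "tail 0 = f"
  by (simp add: tail_def)

lemma norm_tail_Suc_le: "norm (kappa (-s) (tail (Suc m)) w) \<le> norm (kappa (-s) (tail m) w)"
  by (auto simp: tail_def kappa_def)

lemma tail_eventually_0:
  assumes "fst w > 0"
  shows "tail (Suc (cube_number (dyadic_index h w))) w = 0"
proof -
  have "w \<in> dyadic_cube h (cube (cube_number (dyadic_index h w)))"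
    using mem_cube_number_index[OF assms] .
  then have "w \<in> (\<Union>k<Suc (cube_number (dyadic_index h w)). dyadic_cube h (cube k))"
    using lessI by blast
  then show ?thesis by (simp add: tail_def)
qed

lemma whitney_avg_tail_tendsto_0:
  assumes t: "fst z > 0" and fin: "W z < top"
  shows "(\<lambda>m. whitney_avg (1,2) (kappa (-s) (tail m)) z) \<longlonglongrightarrow> 0"
proof -
  define d where "d = (3/2) * unit_ball_vol CARD('n) * fst z ^ (CARD('n) + 1)"
  define F where "F m w = ennreal ((norm (kappa (-s) (tail m) w))\<^sup>2) * indicator (whitney_region (1,2) z) w" for m w
  have D: "emeasure lborel (whitney_region (1,2) z) = ennreal d"
    unfolding d_def using emeasure_whitney_region[of "(1::real,2::real)" z] t by simp
  have d: "d > 0" using t by (simp add: d_def)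
  have avg: "whitney_avg (1,2) (kappa (-s) (tail m)) z = epowr ((\<integral>\<^sup>+ w. F m w \<partial>lborel) / ennreal d) (1/2)" for m
    by (simp add: whitney_avg_def F_def D)
  have [measurable]: "F m \<in> borel_measurable lborel" for m
    unfolding F_def by measurable
  have F_Suc: "F (Suc m) w \<le> F m w" for m w
    unfolding F_def by (intro mult_right_mono ennreal_leI power_mono norm_tail_Suc_le) auto
  have "(\<integral>\<^sup>+ w. F 0 w \<partial>lborel) \<noteq> top"
  proof
    assume "(\<integral>\<^sup>+ w. F 0 w \<partial>lborel) = top"
    then have "W z = top" using avg[of 0] d by (simp add: tail_0 ennreal_divide_eq_top_iff)
    then show False using fin by simp
  qed
  text \<open>Every point of \<open>\<Omega>(z)\<close> lies in one of the cubes, so the tails vanish pointwise.\<close>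
  moreover have "(INF m. F m w) = 0" for w
  proof (cases "w \<in> whitney_region (1,2) z")
    case True
    then have "fst w > 0" using t by (auto simp: whitney_region_def)
    then show ?thesis
      by (intro antisym INF_lower2[of "Suc (cube_number (dyadic_index h w))"])
         (auto simp: F_def kappa_def tail_eventually_0)
  qed (simp add: F_def)
  ultimately have "(INF m. \<integral>\<^sup>+ w. F m w \<partial>lborel) = 0"
    using F_Suc by (subst nn_integral_monotone_convergence_INF_AE'[symmetric])
      (auto simp: top.not_eq_extremum)
  moreover have "decseq (\<lambda>m. \<integral>\<^sup>+ w. F m w \<partial>lborel)"
    using F_Suc by (intro decseq_SucI nn_integral_mono)
  ultimately have "(\<lambda>m. \<integral>\<^sup>+ w. F m w \<partial>lborel) \<longlonglongrightarrow> 0"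
    using LIMSEQ_INF by fastforce
  then have "(\<lambda>m. inverse (ennreal d) * \<integral>\<^sup>+ w. F m w \<partial>lborel) \<longlonglongrightarrow> inverse (ennreal d) * 0"
    using d by (intro ennreal_tendsto_cmult) (simp_all add: inverse_ennreal)
  then show ?thesis
    unfolding avg by (intro tendsto_epowr_zero) (simp_all add: divide_ennreal_def mult.commute)
qed

lemma zp_integral_tail_tendsto_0:
  assumes fin: "zp_integral p s f < top"
  shows "(\<lambda>m. zp_integral p s (tail m)) \<longlonglongrightarrow> 0"
proof -
  define g where "g m z = epowr (whitney_avg (1,2) (kappa (-s) (tail m)) z) p * ennreal (1/fst z) * indicator {z. 0 < fst z} z" for m z
  have zp_g: "zp_integral p s (tail m) = (\<integral>\<^sup>+ z. g m z \<partial>lborel)" for m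
    by (simp add: zp_integral_def g_def)
  have [measurable]: "g m \<in> borel_measurable lborel" for m
    unfolding g_def by measurable
  have g_Suc: "g (Suc m) z \<le> g m z" for m z
    unfolding g_def using p
    by (intro mult_right_mono epowr_mono whitney_avg_mono norm_tail_Suc_le) auto
  have g0: "(\<integral>\<^sup>+ z. g 0 z \<partial>lborel) < \<infinity>" using fin zp_g[of 0] by (simp add: tail_0)
  have "AE z in lborel. g 0 z \<noteq> \<infinity>"
    by (rule nn_integral_PInf_AE) (use g0 in auto)
  then have "AE z in lborel. (INF m. g m z) = 0"
  proof eventually_elim
    case (elim z)
    show ?case
    proof (cases "fst z > 0")
      case True
      then have "W z < top" using elim by (simp add: g_def tail_0 ennreal_mult_eq_top_iff top.not_eq_extremum)
      then have "(\<lambda>m. ennreal (1/fst z) * epowr (whitney_avg (1,2) (kappa (-s) (tail m)) z) p) \<longlonglongrightarrow> ennreal (1/fst z) * 0"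
        using p True by (intro ennreal_tendsto_cmult tendsto_epowr_zero whitney_avg_tail_tendsto_0) auto
      then have "(\<lambda>m. g m z) \<longlonglongrightarrow> 0" using True by (simp add: g_def mult.commute)
      moreover have "(\<lambda>m. g m z) \<longlonglongrightarrow> (INF m. g m z)"
        using g_Suc by (intro LIMSEQ_INF decseq_SucI)
      ultimately show ?thesis using LIMSEQ_unique by blast
    qed (simp add: g_def)
  qed
  then have "(INF m. \<integral>\<^sup>+ z. g m z \<partial>lborel) = 0"
    using g_Suc g0 by (subst nn_integral_monotone_convergence_INF_AE'[symmetric]) (auto simp: g_def cong: nn_integral_cong_AE)
  moreover have "decseq (\<lambda>m. \<integral>\<^sup>+ z. g m z \<partial>lborel)"
    using g_Suc by (intro decseq_SucI nn_integral_mono)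
  ultimately show ?thesis
    unfolding zp_g using LIMSEQ_INF by fastforce
qed

lemma atomic_decomp_lam_atom:
  assumes fin: "zp_integral p s f < top" and wp: "whitney_param c" and hc: "h * real CARD('n) < fst c"
  shows "atomic_decomp p s c f lam atom"
  unfolding atomic_decomp_def
proof (intro conjI allI)
  show "Zp_atom p s c (atom k)" for k
    unfolding Zp_atom_def using atom_is_atom[OF fin wp hc] by blast
  have "lp_sum p lam \<le> ennreal (cube_constant p h CARD('n)) * zp_integral p s f"
    by (rule lp_sum_lam_le[OF fin])
  also have "\<dots> < top" using fin by (simp add: ennreal_mult_less_top)
  finally show "lp_sum p lam < \<infinity>" by simp
  have "(\<lambda>m. epowr (zp_integral p s (tail m)) (1/p)) \<longlonglongrightarrow> 0"
    using p by (intro tendsto_epowr_zero zp_integral_tail_tendsto_0[OF fin]) auto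
  then show "(\<lambda>m. zp_norm p s (\<lambda>w. f w - (\<Sum>k<m. lam k *s atom k w))) \<longlonglongrightarrow> 0"
    by (simp add: zp_norm_eq_epowr zp_integral_remainder_eq[OF fin])
qed

end

lemma atomic_decomp_exists:
  fixes f :: "real \<times> (real^'n::finite) \<Rightarrow> complex^'N::finite"
  assumes wp: "whitney_param c" and p: "0 < p" "p \<le> 1"
    and f: "f \<in> borel_measurable lborel" "zp_norm p s f < top"
  defines "h \<equiv> min 1 (fst c) / (real CARD('n) + 1)"
  shows "\<exists>lam a. atomic_decomp p s c f lam a \<and>
    lp_norm p lam \<le> ennreal (cube_constant p h CARD('n) powr (1/p)) * zp_norm p s f"
proof -
  have h_pos: "h > 0" using wp by (simp add: h_def whitney_param_def)
  have "h * real CARD('n) = min 1 (fst c) * (real CARD('n) / (real CARD('n) + 1))"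
    by (simp add: h_def)
  also have "\<dots> < min 1 (fst c) * 1"
    using wp by (intro mult_strict_left_mono) (auto simp: whitney_param_def)
  finally have h1: "h * real CARD('n) < 1" and hc: "h * real CARD('n) < fst c" by auto
  interpret whitney_cube_decomposition f s p h
    using f p h_pos h1 by unfold_locales
  have fin: "zp_integral p s f < top" using f p by (simp add: zp_norm_eq_epowr)
  have "lp_norm p lam \<le> epowr (ennreal (cube_constant p h CARD('n)) * zp_integral p s f) (1/p)"
    unfolding lp_norm_def using lp_sum_lam_le[OF fin] p by (intro epowr_mono) auto
  also have "\<dots> = ennreal (cube_constant p h CARD('n) powr (1/p)) * zp_norm p s f"
    using p cube_constant_pos[OF h_pos, of p "CARD('n)"] by (simp add: epowr_mult epowr_ennreal zp_norm_eq_epowr)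
  finally show ?thesis
    using atomic_decomp_lam_atom[OF fin wp hc] by blast
qed

lemma le_ennreal_mult_INF:
  assumes C: "C > 0" and le: "\<And>i. i \<in> S \<Longrightarrow> x \<le> ennreal C * F i"
  shows "x \<le> ennreal C * (INF i\<in>S. F i)"
proof -
  have inverse: "ennreal (1/C) * ennreal C = 1" using C by (simp add: ennreal_mult[symmetric])
  have "ennreal (1/C) * x \<le> (INF i\<in>S. F i)"
  proof (rule INF_greatest)
    fix i assume "i \<in> S"
    then have "ennreal (1/C) * x \<le> ennreal (1/C) * ennreal C * F i"
      using le by (simp add: mult.assoc mult_left_mono)
    then show "ennreal (1/C) * x \<le> F i" by (simp add: inverse)
  qed
  then have "ennreal C * (ennreal (1/C) * x) \<le> ennreal C * (INF i\<in>S. F i)"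
    by (rule mult_left_mono) simp
  then show ?thesis by (simp add: mult.assoc[symmetric] mult.commute[of "ennreal C"] inverse)
qed

lemma in_Zp_if_atomic_decomp:
  fixes f :: "real \<times> (real^'n::finite) \<Rightarrow> complex^'N::finite"
  assumes "whitney_param c" "0 < p" "p \<le> 1" "f \<in> borel_measurable lborel"
    and dec: "atomic_decomp p s c f lam a"
  shows "in_Zp p s f"
proof -
  have "ennreal (atom_constant p c CARD('n) powr (1/p)) * lp_norm p lam < top"
    using dec by (simp add: atomic_decomp_def lp_norm_def ennreal_mult_less_top)
  then show ?thesis
    using zp_norm_le_atomic_decomp[OF assms] assms(4) unfolding in_Zp_def by (auto dest: le_less_trans)
qed

lemma zp_norm_le_atomic_norm:
  fixes f :: "real \<times> (real^'n::finite) \<Rightarrow> complex^'N::finite"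
  assumes "whitney_param c" "0 < p" "p \<le> 1" "f \<in> borel_measurable lborel"
  shows "zp_norm p s f \<le> ennreal (atom_constant p c CARD('n) powr (1/p)) * atomic_norm p s c f"
  unfolding atomic_norm_def
proof (rule le_ennreal_mult_INF)
  show "atom_constant p c CARD('n) powr (1/p) > 0"
    using atom_constant_pos[OF assms(1), of p "CARD('n)"] by simp
  show "zp_norm p s f \<le> ennreal (atom_constant p c CARD('n) powr (1/p)) * lp_norm p lam"
    if "lam \<in> {lam. \<exists>a. atomic_decomp p s c f lam a}" for lam
    using that zp_norm_le_atomic_decomp[OF assms] by blast
qed

lemma atomic_norm_le_zp_norm:
  fixes f :: "real \<times> (real^'n::finite) \<Rightarrow> complex^'N::finite"
  assumes "whitney_param c" "0 < p" "p \<le> 1" "in_Zp p s f"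
  shows "atomic_norm p s c f
    \<le> ennreal (cube_constant p (min 1 (fst c) / (real CARD('n) + 1)) CARD('n) powr (1/p)) * zp_norm p s f"
proof -
  obtain lam a where "atomic_decomp p s c f lam a"
    and "lp_norm p lam \<le> ennreal (cube_constant p (min 1 (fst c) / (real CARD('n) + 1)) CARD('n) powr (1/p)) * zp_norm p s f"
    using atomic_decomp_exists[OF assms(1-3), of f s] assms(4) unfolding in_Zp_def by auto
  then show ?thesis
    unfolding atomic_norm_def by (blast intro: INF_lower2)
qed

theorem theorem2p25:
  fixes p s :: real and c :: "real \<times> real"
  assumes "0 < p" and "p \<le> 1" and "whitney_param c"
  shows "(\<forall>f :: real \<times> (real^'n::finite) \<Rightarrow> complex^'N::finite.
            f \<in> borel_measurable lborel \<longrightarrow>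
              (in_Zp p s f \<longleftrightarrow> (\<exists>lam a. atomic_decomp p s c f lam a)))
       \<and> (\<exists>C::real. C > 0 \<and>
            (\<forall>f :: real \<times> (real^'n) \<Rightarrow> complex^'N. in_Zp p s f \<longrightarrow>
               zp_norm p s f \<le> ennreal C * atomic_norm p s c f \<and>
               atomic_norm p s c f \<le> ennreal C * zp_norm p s f))"
proof -
  define K1 where "K1 = atom_constant p c CARD('n) powr (1/p)"
  define K2 where "K2 = cube_constant p (min 1 (fst c) / (real CARD('n) + 1)) CARD('n) powr (1/p)"
  define C where "C = max K1 K2 + 1"
  have "K1 \<ge> 0" "K1 < C" "K2 < C" by (simp_all add: C_def K1_def)
  then have C: "C > 0" "ennreal K1 \<le> ennreal C" "ennreal K2 \<le> ennreal C"
    by (simp_all add: ennreal_leI)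
  have "in_Zp p s f \<longleftrightarrow> (\<exists>lam a. atomic_decomp p s c f lam a)"
    if "f \<in> borel_measurable lborel" for f :: "real \<times> (real^'n) \<Rightarrow> complex^'N"
    using atomic_decomp_exists[OF assms(3,1,2) that, of s] in_Zp_if_atomic_decomp[OF assms(3,1,2) that]
    by (auto simp: in_Zp_def)
  moreover have "zp_norm p s f \<le> ennreal C * atomic_norm p s c f \<and> atomic_norm p s c f \<le> ennreal C * zp_norm p s f"
    if "in_Zp p s f" for f :: "real \<times> (real^'n) \<Rightarrow> complex^'N"
    using zp_norm_le_atomic_norm[OF assms(3,1,2), of f s] atomic_norm_le_zp_norm[OF assms(3,1,2) that]
      C(2,3) that unfolding K1_def K2_def in_Zp_def
    by (meson mult_right_mono order_trans zero_le)
  ultimately show ?thesis using C(1) by blast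
qed

end
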